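(* Let $Y_i=\kappa_i\mu_{0,i}+n^{-1/2}Z_i$, $i\ge1$, with $Z_i$ i.i.d. standard normal, $\mu_0\in\ell_2$, and $(\kappa_i)$ satisfying $C^{-1}i^{-p}\le\kappa_i\le Ci^{-p}$ for some $p\ge0$, $C\ge1$. Define \[ \mathbb{M}_n(\alpha)=\sum_{i=1}^{\infty}\frac{n\log i}{i^{1+2\alpha}\kappa_i^{-2}+n}-\sum_{i=1}^{\infty}\frac{n^2i^{1+2\alpha}\kappa_i^{-2}\log i}{(i^{1+2\alpha}\kappa_i^{-2}+n)^2}Y_i^2 \] and \[ h_n(\alpha)=\frac{1+2\alpha+2p}{n^{1/(1+2\alpha+2p)}\log n}\sum_{i=1}^{\infty}\frac{n^2 i^{1+2\alpha}\mu_{0,i}^2\log i}{(i^{1+2\alpha}\kappa_i^{-2}+n)^2}. \] Then for any $0<\alpha_1<\alpha_2<\infty$, \[ \operatorname{var}_0\Big(\frac{(1+2\alpha_1+2p)\mathbb{M}_n(\alpha_1)}{n^{1/(1+2\alpha_1+2p)}}-\frac{(1+2\alpha_2+2p)\mathbb{M}_n(\alpha_2)}{n^{1/(1+2\alpha_2+2p)}}\Big)\lesssim(\alpha_1-\alpha_2)^2(\log n)^4\sup_{\alpha\in[\alpha_1,\alpha_2]}n^{-1/(1+2\alpha+2p)}\big(1+h_n(\alpha)\big), \] with a constant that does not depend on $\alpha$ and $\mu_0$.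
   Context: $\operatorname{var}_0$ is the variance under the law of $Y$ with true parameter $\mu_0$. $a\lesssim b$ means $a\le Kb$ for a constant $K>0$. *)

theory Defs
  imports "HOL-Probability.Probability"
begin

text \<open>Variance of a real random variable X on the measure space M
  (literal unfolding of the locale abbreviation prob_space.variance).\<close>
definition var_on :: "'a measure \<Rightarrow> ('a \<Rightarrow> real) \<Rightarrow> real" where
  "var_on M X = (LINT x|M. (X x - (LINT y|M. X y))\<^sup>2)"

definition obsY :: "(nat \<Rightarrow> real) \<Rightarrow> (nat \<Rightarrow> real) \<Rightarrow> nat \<Rightarrow> (nat \<Rightarrow> 'a \<Rightarrow> real) \<Rightarrow> nat \<Rightarrow> 'a \<Rightarrow> real" where
  "obsY \<kappa> \<mu> n Z i \<omega> = \<kappa> i * \<mu> i + Z i \<omega> / sqrt (real n)"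

text \<open>M_n(alpha); sums over i = 1, 2, ... written as sums over Suc j.\<close>
definition Mn :: "(nat \<Rightarrow> real) \<Rightarrow> nat \<Rightarrow> (nat \<Rightarrow> real) \<Rightarrow> real \<Rightarrow> real" where
  "Mn \<kappa> n Y \<alpha> =
     (\<Sum>j. real n * ln (real (Suc j)) /
            (real (Suc j) powr (1 + 2*\<alpha>) * inverse ((\<kappa> (Suc j))\<^sup>2) + real n))
   - (\<Sum>j. (real n)\<^sup>2 * real (Suc j) powr (1 + 2*\<alpha>) * inverse ((\<kappa> (Suc j))\<^sup>2) * ln (real (Suc j)) /
            (real (Suc j) powr (1 + 2*\<alpha>) * inverse ((\<kappa> (Suc j))\<^sup>2) + real n)\<^sup>2
            * (Y (Suc j))\<^sup>2)"

definition hn :: "(nat \<Rightarrow> real) \<Rightarrow> real \<Rightarrow> (nat \<Rightarrow> real) \<Rightarrow> nat \<Rightarrow> real \<Rightarrow> real" where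
  "hn \<kappa> p \<mu> n \<alpha> =
     (1 + 2*\<alpha> + 2*p) / (real n powr (1 / (1 + 2*\<alpha> + 2*p)) * ln (real n))
   * (\<Sum>j. (real n)\<^sup>2 * real (Suc j) powr (1 + 2*\<alpha>) * (\<mu> (Suc j))\<^sup>2 * ln (real (Suc j)) /
            (real (Suc j) powr (1 + 2*\<alpha>) * inverse ((\<kappa> (Suc j))\<^sup>2) + real n)\<^sup>2)"

end

theory Submission
  imports Defs
begin

text \<open>Up to a deterministic constant, \<open>(1 + 2\<alpha> + 2p) M\<^sub>n(\<alpha>) / n\<^bsup>1/(1+2\<alpha>+2p)\<^esup>\<close> is
  \<open>-\<Sum>\<^sub>i F\<^sub>i(\<alpha>) Y\<^sub>i\<^sup>2\<close> with deterministic weights \<open>F\<^sub>i\<close>. The \<open>Y\<^sub>i\<^sup>2\<close> are independent with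
  \<open>var Y\<^sub>i\<^sup>2 = 4\<kappa>\<^sub>i\<^sup>2\<mu>\<^sub>0\<^sub>,\<^sub>i\<^sup>2/n + 2/n\<^sup>2\<close>, so the variance in question is
  \<open>\<Sum>\<^sub>i (F\<^sub>i(\<alpha>\<^sub>1) - F\<^sub>i(\<alpha>\<^sub>2))\<^sup>2 var Y\<^sub>i\<^sup>2\<close>, and by Cauchy-Schwarz
  \<open>(F\<^sub>i(\<alpha>\<^sub>1) - F\<^sub>i(\<alpha>\<^sub>2))\<^sup>2 \<le> (\<alpha>\<^sub>2 - \<alpha>\<^sub>1) \<integral> F\<^sub>i'\<^sup>2\<close> over \<open>[\<alpha>\<^sub>1, \<alpha>\<^sub>2]\<close>. It therefore suffices to bound
  \<open>\<Sum>\<^sub>i F\<^sub>i'(\<alpha>)\<^sup>2 var Y\<^sub>i\<^sup>2\<close> pointwise in \<open>\<alpha>\<close>. Splitting the indices at \<open>n\<^bsup>1/(1+2\<alpha>+2p)\<^esup>\<close>, the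
  terms with \<open>\<mu>\<^sub>0\<close> are dominated by the summands of \<open>h\<^sub>n(\<alpha>)\<close>, while the pure-noise terms are
  bounded by \<open>1\<close> below the split point and decay like \<open>(i / n\<^bsup>1/(1+2\<alpha>+2p)\<^esup>)\<^bsup>-3/2\<^esup>\<close> above it.\<close>

lemma std_normal_power_integral:
  assumes "prob_space M" and D: "distributed M lborel X (\<lambda>x. ennreal (std_normal_density x))"
  shows "integrable M (\<lambda>\<omega>. X \<omega> ^ k)"
    and "(\<integral>\<omega>. X \<omega> ^ k \<partial>M) = (\<integral>x. std_normal_density x * x ^ k \<partial>lborel)"
proof -
  have m: "(\<lambda>x::real. x ^ k) \<in> borel_measurable lborel" by simp
  show "integrable M (\<lambda>\<omega>. X \<omega> ^ k)"
    using distributed_integrable[OF D m] integrable_std_normal_moment[of k] by simp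
  show "(\<integral>\<omega>. X \<omega> ^ k \<partial>M) = (\<integral>x. std_normal_density x * x ^ k \<partial>lborel)"
    using distributed_integral[OF D m] by simp
qed

lemma std_normal_quartic_integral:
  assumes P: "prob_space M" and D: "distributed M lborel X (\<lambda>x. ennreal (std_normal_density x))"
  shows "integrable M (\<lambda>\<omega>. c0 + c1 * X \<omega> + c2 * X \<omega>^2 + c3 * X \<omega>^3 + c4 * X \<omega>^4)"
    and "(\<integral>\<omega>. c0 + c1 * X \<omega> + c2 * X \<omega>^2 + c3 * X \<omega>^3 + c4 * X \<omega>^4 \<partial>M) = c0 + c2 + 3 * c4"
proof -
  interpret prob_space M by fact
  have i: "\<And>k. integrable M (\<lambda>\<omega>. X \<omega> ^ k)" using std_normal_power_integral(1)[OF P D] .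
  have i1: "integrable M (\<lambda>\<omega>. X \<omega>)" using i[of 1] by simp
  have m1: "(\<integral>\<omega>. X \<omega> \<partial>M) = 0"
    using std_normal_power_integral(2)[OF P D, of 1] integral_std_normal_moment_odd[of 0] by simp
  have m2: "(\<integral>\<omega>. X \<omega>^2 \<partial>M) = 1"
    using std_normal_power_integral(2)[OF P D, of 2] integral_std_normal_moment_even[of 1] by simp
  have m3: "(\<integral>\<omega>. X \<omega>^3 \<partial>M) = 0"
    using std_normal_power_integral(2)[OF P D, of 3] integral_std_normal_moment_odd[of 1] by simp
  have m4: "(\<integral>\<omega>. X \<omega>^4 \<partial>M) = 3"
    using std_normal_power_integral(2)[OF P D, of 4] integral_std_normal_moment_even[of 2]
    by (simp add: fact_numeral)
  show "integrable M (\<lambda>\<omega>. c0 + c1 * X \<omega> + c2 * X \<omega>^2 + c3 * X \<omega>^3 + c4 * X \<omega>^4)"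
    using i i1 by (intro Bochner_Integration.integrable_add integrable_mult_right integrable_const) auto
  then show "(\<integral>\<omega>. c0 + c1 * X \<omega> + c2 * X \<omega>^2 + c3 * X \<omega>^3 + c4 * X \<omega>^4 \<partial>M) = c0 + c2 + 3 * c4"
    using i i1 m1 m2 m3 m4 by (simp add: prob_space)
qed

lemma shifted_std_normal_sq_moments:
  fixes a N :: real
  assumes P: "prob_space M" and D: "distributed M lborel X (\<lambda>x. ennreal (std_normal_density x))"
    and N: "N > 0"
  defines "V \<equiv> \<lambda>\<omega>. (a + X \<omega> / sqrt N)^2 - (a^2 + 1/N)"
  shows "integrable M V" and "(\<integral>\<omega>. V \<omega> \<partial>M) = 0"
    and "integrable M (\<lambda>\<omega>. (V \<omega>)^2)" and "(\<integral>\<omega>. (V \<omega>)^2 \<partial>M) = 4*a^2/N + 2/N^2"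
proof -
  obtain r where r: "r > 0" "N = r^2" using N by (intro that[of "sqrt N"]) auto
  have sr: "sqrt N = r" using r by simp
  have V: "V = (\<lambda>\<omega>. (-1/N) + (2*a/r) * X \<omega> + (1/N) * X \<omega>^2 + 0 * X \<omega>^3 + 0 * X \<omega>^4)"
    unfolding V_def sr using r by (auto simp: fun_eq_iff field_simps power2_eq_square)
  have V2: "(\<lambda>\<omega>. (V \<omega>)^2) = (\<lambda>\<omega>. (1/N^2) + (-4*a/(r * N)) * X \<omega> + (4*a^2/N - 2/N^2) * X \<omega>^2
       + (4*a/(r * N)) * X \<omega>^3 + (1/N^2) * X \<omega>^4)"
  proof -
    have "((a + x/r)^2 - (a^2 + 1/r^2))^2 = 1/(r^2)^2 + (-4*a/(r * r^2)) * x
        + (4*a^2/r^2 - 2/(r^2)^2) * x^2 + (4*a/(r * r^2)) * x^3 + (1/(r^2)^2) * x^4" for x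
      using r(1) by (simp add: field_simps) algebra
    then show ?thesis unfolding V_def sr r(2) using r(1) by (simp add: fun_eq_iff)
  qed
  show "integrable M V"
    unfolding V by (rule std_normal_quartic_integral(1)[OF P D])
  show "integrable M (\<lambda>\<omega>. (V \<omega>)^2)"
    unfolding V2 by (rule std_normal_quartic_integral(1)[OF P D])
  show "(\<integral>\<omega>. V \<omega> \<partial>M) = 0"
    unfolding V by (subst std_normal_quartic_integral(2)[OF P D]) (use N in simp)
  show "(\<integral>\<omega>. (V \<omega>)^2 \<partial>M) = 4*a^2/N + 2/N^2"
    unfolding V2 by (subst std_normal_quartic_integral(2)[OF P D]) (use N in \<open>simp add: field_simps\<close>)
qed

lemma nn_integral_shifted_std_normal_sq:
  fixes b N :: real
  assumes P: "prob_space M" and D: "distributed M lborel X (\<lambda>x. ennreal (std_normal_density x))"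
    and N: "N > 0"
  shows "(\<integral>\<^sup>+\<omega>. ennreal ((b + X \<omega> / sqrt N)^2) \<partial>M) = ennreal (b^2 + 1/N)"
proof -
  interpret prob_space M by fact
  note V = shifted_std_normal_sq_moments[OF P D N, of b]
  have e: "(\<lambda>\<omega>. (b + X \<omega> / sqrt N)^2) = (\<lambda>\<omega>. ((b + X \<omega> / sqrt N)^2 - (b^2 + 1/N)) + (b^2 + 1/N))"
    by simp
  have int: "integrable M (\<lambda>\<omega>. (b + X \<omega> / sqrt N)^2)"
    by (subst e, rule Bochner_Integration.integrable_add[OF V(1)]) simp
  have "(\<integral>\<omega>. (b + X \<omega> / sqrt N)^2 \<partial>M) = b^2 + 1/N"
    by (subst e, subst Bochner_Integration.integral_add[OF V(1)]) (auto simp: V(2) prob_space)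
  then show ?thesis using nn_integral_eq_integral[OF int] by simp
qed

lemma indep_vars_integral_mult:
  fixes Z :: "'i \<Rightarrow> 'a \<Rightarrow> real" and \<phi> \<psi> :: "real \<Rightarrow> real"
  assumes P: "prob_space M" and I: "prob_space.indep_vars M (\<lambda>_. borel) Z UNIV"
    and ik: "i \<noteq> k" and m: "\<phi> \<in> borel_measurable borel" "\<psi> \<in> borel_measurable borel"
    and i1: "integrable M (\<lambda>\<omega>. \<phi> (Z i \<omega>))" and i2: "integrable M (\<lambda>\<omega>. \<psi> (Z k \<omega>))"
  shows "integrable M (\<lambda>\<omega>. \<phi> (Z i \<omega>) * \<psi> (Z k \<omega>))"
    and "(\<integral>\<omega>. \<phi> (Z i \<omega>) * \<psi> (Z k \<omega>) \<partial>M) = (\<integral>\<omega>. \<phi> (Z i \<omega>) \<partial>M) * (\<integral>\<omega>. \<psi> (Z k \<omega>) \<partial>M)"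
proof -
  interpret prob_space M by fact
  have "indep_var borel ((\<lambda>f. \<phi> (f i)) \<circ> (\<lambda>\<omega>. restrict (\<lambda>i. Z i \<omega>) {i}))
      borel ((\<lambda>f. \<psi> (f k)) \<circ> (\<lambda>\<omega>. restrict (\<lambda>i. Z i \<omega>) {k}))"
    using ik m by (intro indep_var_compose[OF indep_var_restrict[OF I]]) auto
  also have "((\<lambda>f. \<phi> (f i)) \<circ> (\<lambda>\<omega>. restrict (\<lambda>i. Z i \<omega>) {i})) = (\<lambda>\<omega>. \<phi> (Z i \<omega>))" by auto
  also have "((\<lambda>f. \<psi> (f k)) \<circ> (\<lambda>\<omega>. restrict (\<lambda>i. Z i \<omega>) {k})) = (\<lambda>\<omega>. \<psi> (Z k \<omega>))" by auto
  finally have iv: "indep_var borel (\<lambda>\<omega>. \<phi> (Z i \<omega>)) borel (\<lambda>\<omega>. \<psi> (Z k \<omega>))" .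
  show "integrable M (\<lambda>\<omega>. \<phi> (Z i \<omega>) * \<psi> (Z k \<omega>))"
    by (rule indep_var_integrable[OF iv i1 i2])
  show "(\<integral>\<omega>. \<phi> (Z i \<omega>) * \<psi> (Z k \<omega>) \<partial>M) = (\<integral>\<omega>. \<phi> (Z i \<omega>) \<partial>M) * (\<integral>\<omega>. \<psi> (Z k \<omega>) \<partial>M)"
    by (rule indep_var_lebesgue_integral[OF iv i1 i2])
qed

lemma integral_sq_weighted_sum_centered_chisq:
  fixes Z :: "nat \<Rightarrow> 'a \<Rightarrow> real" and a d :: "nat \<Rightarrow> real" and N :: real
  assumes P: "prob_space M" and I: "prob_space.indep_vars M (\<lambda>_. borel) Z UNIV"
    and D: "\<And>i. distributed M lborel (Z i) (\<lambda>x. ennreal (std_normal_density x))"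
    and N: "N > 0"
  defines "V \<equiv> \<lambda>j \<omega>. (a (Suc j) + Z (Suc j) \<omega> / sqrt N)^2 - (a (Suc j)^2 + 1/N)"
  shows "integrable M (\<lambda>\<omega>. (\<Sum>j<m. d j * V j \<omega>)^2)"
    and "(\<integral>\<omega>. (\<Sum>j<m. d j * V j \<omega>)^2 \<partial>M) = (\<Sum>j<m. (d j)^2 * (4 * (a (Suc j))^2 / N + 2 / N^2))"
proof -
  interpret prob_space M by fact
  have E: "integrable M (\<lambda>\<omega>. V j \<omega> * V k \<omega>) \<and>
      (\<integral>\<omega>. V j \<omega> * V k \<omega> \<partial>M) = (if j = k then 4 * (a (Suc j))^2 / N + 2 / N^2 else 0)" for j k
  proof (cases "j = k")
    case True
    then show ?thesis
      using shifted_std_normal_sq_moments(3,4)[OF P D[of "Suc j"] N, of "a (Suc j)"]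
      unfolding V_def by (simp add: power2_eq_square)
  next
    case False
    note V = shifted_std_normal_sq_moments(1,2)[OF P D N]
    from indep_vars_integral_mult[OF P I _ _ _ V(1) V(1), of "Suc j" "Suc k"] V(2) False
    show ?thesis unfolding V_def by simp
  qed
  have sq: "(\<lambda>\<omega>. (\<Sum>j<m. d j * V j \<omega>)^2) = (\<lambda>\<omega>. \<Sum>j<m. \<Sum>k<m. d j * d k * (V j \<omega> * V k \<omega>))"
    by (auto simp: fun_eq_iff power2_eq_square sum_product algebra_simps)
  have ii: "integrable M (\<lambda>\<omega>. d j * d k * (V j \<omega> * V k \<omega>))" for j k
    using E by (intro integrable_mult_right) auto
  show "integrable M (\<lambda>\<omega>. (\<Sum>j<m. d j * V j \<omega>)^2)"
    unfolding sq using ii by (intro Bochner_Integration.integrable_sum) auto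
  have "(\<integral>\<omega>. (\<Sum>j<m. d j * V j \<omega>)^2 \<partial>M) = (\<Sum>j<m. \<Sum>k<m. d j * d k * (\<integral>\<omega>. V j \<omega> * V k \<omega> \<partial>M))"
    unfolding sq using ii
    by (simp add: Bochner_Integration.integral_sum Bochner_Integration.integrable_sum)
  also have "\<dots> = (\<Sum>j<m. \<Sum>k<m. if j = k then d j * d k * (4 * (a (Suc j))^2 / N + 2 / N^2) else 0)"
    using E by (intro sum.cong refl) auto
  also have "\<dots> = (\<Sum>j<m. (d j)^2 * (4 * (a (Suc j))^2 / N + 2 / N^2))"
    by (intro sum.cong refl) (auto simp: power2_eq_square)
  finally show "(\<integral>\<omega>. (\<Sum>j<m. d j * V j \<omega>)^2 \<partial>M) = (\<Sum>j<m. (d j)^2 * (4 * (a (Suc j))^2 / N + 2 / N^2))" .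
qed

lemma var_on_le_nn_integral_sq:
  fixes X :: "'a \<Rightarrow> real"
  assumes P: "prob_space M" and X[measurable]: "X \<in> borel_measurable M"
    and B: "B \<ge> 0" and le: "(\<integral>\<^sup>+\<omega>. ennreal ((X \<omega> - c)^2) \<partial>M) \<le> ennreal B"
  shows "var_on M X \<le> B"
proof -
  interpret prob_space M by fact
  have i2: "integrable M (\<lambda>\<omega>. (X \<omega> - c)^2)"
  proof (rule integrableI_nonneg)
    show "(\<integral>\<^sup>+\<omega>. ennreal ((X \<omega> - c)^2) \<partial>M) < \<infinity>"
      using le by (rule order.strict_trans1) simp
  qed auto
  have i1: "integrable M (\<lambda>\<omega>. X \<omega> - c)"
  proof (rule Bochner_Integration.integrable_bound[OF Bochner_Integration.integrable_add[OF i2 integrable_const[of 1]]])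
    show "AE x in M. norm (X x - c) \<le> norm ((X x - c)^2 + 1)"
    proof
      fix x
      have "\<bar>X x - c\<bar> \<le> (X x - c)^2 + 1"
      proof (cases "\<bar>X x - c\<bar> \<le> 1")
        case False
        then have "\<bar>X x - c\<bar> * 1 \<le> \<bar>X x - c\<bar> * \<bar>X x - c\<bar>" by (intro mult_left_mono) auto
        then show ?thesis by (simp add: power2_eq_square)
      qed (smt (verit) zero_le_power2)
      then show "norm (X x - c) \<le> norm ((X x - c)^2 + 1)" by simp
    qed
  qed simp
  have iX: "integrable M X" using Bochner_Integration.integrable_add[OF i1 integrable_const[of c]] by simp
  define m where "m = (\<integral>\<omega>. X \<omega> \<partial>M)"
  have e: "(\<lambda>\<omega>. (X \<omega> - m)^2) = (\<lambda>\<omega>. (X \<omega> - c)^2 + (- 2*(m-c)) * (X \<omega> - c) + (m-c)^2)"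
    by (auto simp: fun_eq_iff power2_eq_square algebra_simps)
  have Ec: "(\<integral>\<omega>. X \<omega> - c \<partial>M) = m - c" using iX by (simp add: m_def prob_space)
  have "var_on M X = (\<integral>\<omega>. (X \<omega> - c)^2 + (- 2*(m-c)) * (X \<omega> - c) + (m-c)^2 \<partial>M)"
    unfolding var_on_def m_def[symmetric] e ..
  also have "\<dots> = (\<integral>\<omega>. (X \<omega> - c)^2 \<partial>M) + (- 2*(m-c)) * (\<integral>\<omega>. X \<omega> - c \<partial>M) + (m-c)^2"
    using i1 i2 by (simp add: prob_space)
  also have "\<dots> = (\<integral>\<omega>. (X \<omega> - c)^2 \<partial>M) - (m-c)^2"
    unfolding Ec by (simp add: power2_eq_square algebra_simps)
  also have "\<dots> \<le> (\<integral>\<omega>. (X \<omega> - c)^2 \<partial>M)" by simp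
  also have "\<dots> \<le> B"
  proof -
    have "ennreal (\<integral>\<omega>. (X \<omega> - c)^2 \<partial>M) = (\<integral>\<^sup>+\<omega>. ennreal ((X \<omega> - c)^2) \<partial>M)"
      using i2 by (intro nn_integral_eq_integral[symmetric]) auto
    with le B show ?thesis by (simp add: ennreal_le_iff[symmetric])
  qed
  finally show ?thesis .
qed

lemma nn_integral_sq_le_of_AE_tendsto:
  fixes f :: "nat \<Rightarrow> 'a \<Rightarrow> real"
  assumes [measurable]: "\<And>m. f m \<in> borel_measurable M"
    and lim: "AE \<omega> in M. (\<lambda>m. f m \<omega>) \<longlonglongrightarrow> g \<omega>"
    and bnd: "\<And>m. (\<integral>\<^sup>+\<omega>. ennreal ((f m \<omega>)^2) \<partial>M) \<le> B"
  shows "(\<integral>\<^sup>+\<omega>. ennreal ((g \<omega>)^2) \<partial>M) \<le> B"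
proof -
  have "(\<integral>\<^sup>+\<omega>. ennreal ((g \<omega>)^2) \<partial>M) = (\<integral>\<^sup>+\<omega>. liminf (\<lambda>m. ennreal ((f m \<omega>)^2)) \<partial>M)"
    using lim
  proof (intro nn_integral_cong_AE, eventually_elim)
    case (elim \<omega>)
    then have "(\<lambda>m. ennreal ((f m \<omega>)^2)) \<longlonglongrightarrow> ennreal ((g \<omega>)^2)"
      by (intro tendsto_ennrealI tendsto_power)
    then show ?case by (intro lim_imp_Liminf[symmetric]) auto
  qed
  also have "\<dots> \<le> liminf (\<lambda>m. (\<integral>\<^sup>+\<omega>. ennreal ((f m \<omega>)^2) \<partial>M))"
    by (intro nn_integral_liminf) measurable
  also have "\<dots> \<le> limsup (\<lambda>m. (\<integral>\<^sup>+\<omega>. ennreal ((f m \<omega>)^2) \<partial>M))"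
    by (intro Liminf_le_Limsup) simp
  also have "\<dots> \<le> B"
    using bnd by (intro Limsup_bounded always_eventually allI)
  finally show ?thesis .
qed

lemma AE_summable_weighted_shifted_std_normal_sq:
  fixes Z :: "nat \<Rightarrow> 'a \<Rightarrow> real" and a u :: "nat \<Rightarrow> real" and N :: real
  assumes P: "prob_space M"
    and D: "\<And>i. distributed M lborel (Z i) (\<lambda>x. ennreal (std_normal_density x))"
    and N: "N > 0" and u: "\<And>j. u j \<ge> 0" and s: "summable (\<lambda>j. u j * (a (Suc j)^2 + 1/N))"
  shows "AE \<omega> in M. summable (\<lambda>j. u j * (a (Suc j) + Z (Suc j) \<omega> / sqrt N)^2)"
proof -
  interpret prob_space M by fact
  have [measurable]: "Z i \<in> borel_measurable M" for i using distributed_measurable[OF D[of i]] by simp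
  have "(\<integral>\<^sup>+\<omega>. (\<Sum>j. ennreal (u j * (a (Suc j) + Z (Suc j) \<omega> / sqrt N)^2)) \<partial>M)
     = (\<Sum>j. (\<integral>\<^sup>+\<omega>. ennreal (u j * (a (Suc j) + Z (Suc j) \<omega> / sqrt N)^2) \<partial>M))"
    by (intro nn_integral_suminf) measurable
  also have "\<dots> = (\<Sum>j. ennreal (u j * (a (Suc j)^2 + 1/N)))"
  proof (intro suminf_cong)
    fix j
    have "(\<integral>\<^sup>+\<omega>. ennreal (u j * (a (Suc j) + Z (Suc j) \<omega> / sqrt N)^2) \<partial>M)
       = ennreal (u j) * (\<integral>\<^sup>+\<omega>. ennreal ((a (Suc j) + Z (Suc j) \<omega> / sqrt N)^2) \<partial>M)"
      using u by (subst nn_integral_cmult[symmetric]) (auto intro!: nn_integral_cong simp: ennreal_mult)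
    then show "(\<integral>\<^sup>+\<omega>. ennreal (u j * (a (Suc j) + Z (Suc j) \<omega> / sqrt N)^2) \<partial>M) = ennreal (u j * (a (Suc j)^2 + 1/N))"
      using u N by (simp add: nn_integral_shifted_std_normal_sq[OF P D N] ennreal_mult)
  qed
  also have "\<dots> = ennreal (\<Sum>j. u j * (a (Suc j)^2 + 1/N))"
    using u N s by (intro suminf_ennreal2) (auto intro!: mult_nonneg_nonneg add_nonneg_nonneg)
  finally have "(\<integral>\<^sup>+\<omega>. (\<Sum>j. ennreal (u j * (a (Suc j) + Z (Suc j) \<omega> / sqrt N)^2)) \<partial>M) \<noteq> \<infinity>"
    by simp
  then have "AE \<omega> in M. (\<Sum>j. ennreal (u j * (a (Suc j) + Z (Suc j) \<omega> / sqrt N)^2)) \<noteq> \<infinity>"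
    by (intro nn_integral_PInf_AE) measurable
  then show ?thesis
    by eventually_elim (rule summable_suminf_not_top, use u in auto)
qed

lemma var_on_diff_weighted_shifted_std_normal_sq_le:
  fixes Z :: "nat \<Rightarrow> 'a \<Rightarrow> real" and a u1 u2 :: "nat \<Rightarrow> real" and N c1 c2 e1 e2 S1 S2 B :: real
  assumes P: "prob_space M" and I: "prob_space.indep_vars M (\<lambda>_. borel) Z UNIV"
    and D: "\<And>i. distributed M lborel (Z i) (\<lambda>x. ennreal (std_normal_density x))"
    and N: "N > 0" and u1: "\<And>j. u1 j \<ge> 0" and u2: "\<And>j. u2 j \<ge> 0"
    and s1: "summable (\<lambda>j. u1 j * (a (Suc j)^2 + 1/N))"
    and s2: "summable (\<lambda>j. u2 j * (a (Suc j)^2 + 1/N))"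
    and B: "B \<ge> 0"
    and bnd: "\<And>m. (\<Sum>j<m. (c1 / e1 * u1 j - c2 / e2 * u2 j)^2 * (4 * (a (Suc j))^2 / N + 2 / N^2)) \<le> B"
  shows "var_on M (\<lambda>\<omega>. c1 * (S1 - (\<Sum>j. u1 j * (a (Suc j) + Z (Suc j) \<omega> / sqrt N)^2)) / e1
                      - c2 * (S2 - (\<Sum>j. u2 j * (a (Suc j) + Z (Suc j) \<omega> / sqrt N)^2)) / e2) \<le> B"
proof -
  interpret prob_space M by fact
  have [measurable]: "Z i \<in> borel_measurable M" for i using distributed_measurable[OF D[of i]] by simp
  define d where "d j = c1 / e1 * u1 j - c2 / e2 * u2 j" for j
  define e where "e j = a (Suc j)^2 + 1/N" for j
  define Q where "Q j \<omega> = (a (Suc j) + Z (Suc j) \<omega> / sqrt N)^2" for j \<omega>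
  define V where "V j \<omega> = Q j \<omega> - e j" for j \<omega>
  define X where "X \<omega> = c1 * (S1 - (\<Sum>j. u1 j * Q j \<omega>)) / e1 - c2 * (S2 - (\<Sum>j. u2 j * Q j \<omega>)) / e2" for \<omega>
  define c where "c = c1 / e1 * S1 - c2 / e2 * S2 - (\<Sum>j. d j * e j)"
  have sde: "summable (\<lambda>j. d j * e j)"
    unfolding d_def left_diff_distrib mult.assoc e_def using s1 s2 by (intro summable_diff summable_mult)
  have lim: "AE \<omega> in M. (\<lambda>m. - (\<Sum>j<m. d j * V j \<omega>)) \<longlonglongrightarrow> X \<omega> - c"
    using AE_summable_weighted_shifted_std_normal_sq[where a=a and Z=Z, OF P D N u1 s1]
      AE_summable_weighted_shifted_std_normal_sq[where a=a and Z=Z, OF P D N u2 s2]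
  proof eventually_elim
    case (elim \<omega>)
    then have q1: "summable (\<lambda>j. u1 j * Q j \<omega>)" and q2: "summable (\<lambda>j. u2 j * Q j \<omega>)"
      unfolding Q_def .
    have sdQ: "summable (\<lambda>j. d j * Q j \<omega>)"
      unfolding d_def left_diff_distrib mult.assoc using q1 q2 by (intro summable_diff summable_mult)
    have sdV: "summable (\<lambda>j. d j * V j \<omega>)"
      using summable_diff[OF sdQ sde] unfolding V_def by (simp add: right_diff_distrib)
    have "(\<Sum>j. d j * Q j \<omega>) = c1/e1 * (\<Sum>j. u1 j * Q j \<omega>) - c2/e2 * (\<Sum>j. u2 j * Q j \<omega>)"
    proof -
      have "(\<Sum>j. d j * Q j \<omega>) = (\<Sum>j. c1/e1 * (u1 j * Q j \<omega>)) - (\<Sum>j. c2/e2 * (u2 j * Q j \<omega>))"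
        unfolding d_def left_diff_distrib mult.assoc using q1 q2
        by (intro suminf_diff[symmetric] summable_mult)
      then show ?thesis using suminf_mult[OF q1, of "c1/e1"] suminf_mult[OF q2, of "c2/e2"] by simp
    qed
    moreover have "(\<Sum>j. d j * Q j \<omega>) = (\<Sum>j. d j * e j) + (\<Sum>j. d j * V j \<omega>)"
      using suminf_add[OF sde sdV] by (simp add: V_def algebra_simps)
    ultimately have "X \<omega> - c = - (\<Sum>j. d j * V j \<omega>)"
      unfolding c_def X_def by (simp add: right_diff_distrib diff_divide_distrib)
    then show ?case using summable_LIMSEQ[OF sdV] by (simp add: tendsto_minus)
  qed
  have bnd': "(\<integral>\<^sup>+\<omega>. ennreal ((- (\<Sum>j<m. d j * V j \<omega>))^2) \<partial>M) \<le> ennreal B" for m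
  proof -
    note sq = integral_sq_weighted_sum_centered_chisq[where a=a and d=d and m=m, OF P I D N]
    have "(\<integral>\<^sup>+\<omega>. ennreal ((- (\<Sum>j<m. d j * V j \<omega>))^2) \<partial>M)
        = ennreal (\<Sum>j<m. (d j)^2 * (4 * (a (Suc j))^2 / N + 2 / N^2))"
      using nn_integral_eq_integral[OF sq(1)] sq(2) unfolding V_def Q_def e_def by simp
    then show ?thesis using bnd unfolding d_def by (simp add: ennreal_leI)
  qed
  have "(\<integral>\<^sup>+\<omega>. ennreal ((X \<omega> - c)^2) \<partial>M) \<le> ennreal B"
    by (rule nn_integral_sq_le_of_AE_tendsto[OF _ lim bnd']) (simp add: V_def Q_def e_def)
  from var_on_le_nn_integral_sq[OF P _ B this] show ?thesis unfolding X_def Q_def by simp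
qed

lemma sq_increment_le_integral_sq_deriv:
  fixes F f :: "real \<Rightarrow> real"
  assumes ab: "a \<le> b" and d: "\<And>x. x \<in> {a..b} \<Longrightarrow> (F has_real_derivative f x) (at x)"
    and c: "continuous_on {a..b} f"
  shows "(F b - F a)^2 \<le> (b - a) * integral {a..b} (\<lambda>x. (f x)^2)"
proof (cases "a = b")
  case True then show ?thesis by simp
next
  case False
  with ab have ab': "a < b" by simp
  have I: "integral {a..b} f = F b - F a"
    using fundamental_theorem_of_calculus[OF ab, of F f] d
    by (auto simp: has_real_derivative_iff_has_vector_derivative[symmetric] intro: has_field_derivative_at_within dest: integral_unique)
  define k where "k = (F b - F a) / (b - a)"
  have i1: "f integrable_on {a..b}" using c by (rule integrable_continuous_interval)
  have i2: "(\<lambda>x. (f x)^2) integrable_on {a..b}"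
    using c by (intro integrable_continuous_interval continuous_intros)
  have "0 \<le> integral {a..b} (\<lambda>x. (f x - k)^2)" by (rule integral_nonneg) (use c in \<open>auto intro!: integrable_continuous_interval continuous_intros\<close>)
  also have "integral {a..b} (\<lambda>x. (f x - k)^2) = integral {a..b} (\<lambda>x. (f x)^2 + (- 2 * k) * f x + k^2)"
    by (simp add: power2_eq_square algebra_simps)
  also have "\<dots> = integral {a..b} (\<lambda>x. (f x)^2) + (- 2 * k) * integral {a..b} f + (b - a) * k^2"
  proof -
    have i3: "(\<lambda>x. (- 2 * k) * f x) integrable_on {a..b}" using i1 by (rule integrable_on_mult_right)
    have "integral {a..b} (\<lambda>x. (f x)^2 + (- 2 * k) * f x + k^2) = integral {a..b} (\<lambda>x. (f x)^2 + (- 2 * k) * f x) + integral {a..b} (\<lambda>x. k^2)"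
      using i2 i3 by (intro integral_add integrable_add) auto
    also have "integral {a..b} (\<lambda>x. (f x)^2 + (- 2 * k) * f x) = integral {a..b} (\<lambda>x. (f x)^2) + integral {a..b} (\<lambda>x. (- 2 * k) * f x)"
      using i2 i3 by (intro integral_add) auto
    finally show ?thesis using ab by simp
  qed
  also have "\<dots> = integral {a..b} (\<lambda>x. (f x)^2) - (F b - F a)^2 / (b - a)"
  proof -
    have g: "\<And>(y::real) (t::real). t > 0 \<Longrightarrow> (- 2 * (y/t)) * y + t * (y/t)^2 = - (y^2)/t"
      by (simp add: field_simps power2_eq_square)
    have "b - a > 0" using ab' by simp
    from g[OF this, of "F b - F a"] show ?thesis unfolding I k_def by simp
  qed
  finally show ?thesis using ab' by (simp add: field_simps)
qed

lemma weighted_sum_sq_increments_le: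
  fixes F f :: "nat \<Rightarrow> real \<Rightarrow> real" and v :: "nat \<Rightarrow> real"
  assumes ab: "a \<le> b" and d: "\<And>j x. x \<in> {a..b} \<Longrightarrow> (F j has_real_derivative f j x) (at x)"
    and c: "\<And>j. continuous_on {a..b} (f j)" and v: "\<And>j. v j \<ge> 0"
    and bd: "\<And>x. x \<in> {a..b} \<Longrightarrow> (\<Sum>j<m. v j * (f j x)^2) \<le> Bd"
  shows "(\<Sum>j<m. v j * (F j a - F j b)^2) \<le> (b - a)^2 * Bd"
proof -
  have "(\<Sum>j<m. v j * (F j a - F j b)^2) \<le> (\<Sum>j<m. v j * ((b - a) * integral {a..b} (\<lambda>x. (f j x)^2)))"
    using sq_increment_le_integral_sq_deriv[OF ab d c] v by (intro sum_mono mult_left_mono) (auto simp: power2_commute)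
  also have "\<dots> = (b - a) * integral {a..b} (\<lambda>x. \<Sum>j<m. v j * (f j x)^2)"
    using c by (subst integral_sum) (auto simp: sum_distrib_left algebra_simps intro!: integrable_continuous_interval continuous_intros)
  also have "\<dots> \<le> (b - a) * integral {a..b} (\<lambda>x. Bd)"
    using ab bd c by (intro mult_left_mono integral_le) (auto intro!: integrable_continuous_interval continuous_intros)
  also have "\<dots> = (b - a)^2 * Bd" using ab by (simp add: power2_eq_square)
  finally show ?thesis .
qed

text \<open>With \<open>l = ln n\<close>, \<open>L = ln i\<close> and \<open>q = \<kappa>\<^sub>i\<^sup>-\<^sup>2\<close>: \<open>rate_factor l p \<alpha> = \<gamma> n\<^bsup>-1/\<gamma>\<^esup>\<close> for
  \<open>\<gamma> = 1 + 2\<alpha> + 2p\<close>, \<open>spectral_scale L q \<alpha> = i\<^bsup>1+2\<alpha>\<^esup> \<kappa>\<^sub>i\<^sup>-\<^sup>2\<close>, and \<open>chisq_weight\<close> is the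
  coefficient of \<open>Y\<^sub>i\<^sup>2\<close> in \<open>M\<^sub>n(\<alpha>)\<close>.\<close>

definition rate_factor :: "real \<Rightarrow> real \<Rightarrow> real \<Rightarrow> real" where
  "rate_factor l p \<alpha> = (1 + 2*\<alpha> + 2*p) * exp (- l / (1 + 2*\<alpha> + 2*p))"

definition rate_factor_deriv :: "real \<Rightarrow> real \<Rightarrow> real \<Rightarrow> real" where
  "rate_factor_deriv l p \<alpha> = 2 * exp (- l / (1 + 2*\<alpha> + 2*p)) * (1 + l / (1 + 2*\<alpha> + 2*p))"

definition spectral_scale :: "real \<Rightarrow> real \<Rightarrow> real \<Rightarrow> real" where
  "spectral_scale L q \<alpha> = exp ((1 + 2*\<alpha>) * L) * q"

definition chisq_weight :: "real \<Rightarrow> real \<Rightarrow> real \<Rightarrow> real \<Rightarrow> real" where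
  "chisq_weight N L q \<alpha> = N^2 * spectral_scale L q \<alpha> * L / (spectral_scale L q \<alpha> + N)^2"

definition chisq_weight_deriv :: "real \<Rightarrow> real \<Rightarrow> real \<Rightarrow> real \<Rightarrow> real" where
  "chisq_weight_deriv N L q \<alpha> =
     2 * L * L * N^2 * spectral_scale L q \<alpha> * (N - spectral_scale L q \<alpha>) / (spectral_scale L q \<alpha> + N)^3"

definition scaled_weight_deriv :: "real \<Rightarrow> real \<Rightarrow> real \<Rightarrow> real \<Rightarrow> real \<Rightarrow> real \<Rightarrow> real" where
  "scaled_weight_deriv N L q l p \<alpha> =
     rate_factor_deriv l p \<alpha> * chisq_weight N L q \<alpha> + rate_factor l p \<alpha> * chisq_weight_deriv N L q \<alpha>"

lemma rate_factor_has_derivative: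
  assumes "1 + 2*\<alpha> + 2*p > 0"
  shows "(rate_factor l p has_real_derivative rate_factor_deriv l p \<alpha>) (at \<alpha>)"
  unfolding rate_factor_def rate_factor_deriv_def
  using assms by (auto intro!: derivative_eq_intros simp: divide_simps) (simp_all add: algebra_simps)

lemma spectral_scale_pos: "q > 0 \<Longrightarrow> spectral_scale L q \<alpha> > 0"
  unfolding spectral_scale_def by simp

lemma chisq_weight_nonneg: "q > 0 \<Longrightarrow> L \<ge> 0 \<Longrightarrow> chisq_weight N L q \<alpha> \<ge> 0"
  unfolding chisq_weight_def using spectral_scale_pos[of q L \<alpha>] by simp

lemma chisq_weight_has_derivative:
  assumes q: "q > 0" and N: "N > 0"
  shows "(chisq_weight N L q has_real_derivative chisq_weight_deriv N L q \<alpha>) (at \<alpha>)"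
proof -
  define E where "E = spectral_scale L q \<alpha>"
  have E: "E > 0" using spectral_scale_pos[OF q] unfolding E_def .
  have dE: "(spectral_scale L q has_real_derivative 2 * L * E) (at \<alpha>)"
    unfolding E_def spectral_scale_def by (auto intro!: derivative_eq_intros)
  have "(chisq_weight N L q has_real_derivative
      ((N^2 * (2 * L * E) * L) * (E + N)^2 - N^2 * E * L * (2 * (E + N) * (2 * L * E))) / ((E + N)^2)^2) (at \<alpha>)"
    unfolding chisq_weight_def using E N
    by (auto intro!: derivative_eq_intros dE simp: E_def[symmetric] power2_eq_square)
  moreover have "((N^2 * (2 * L * E) * L) * (E + N)^2 - N^2 * E * L * (2 * (E + N) * (2 * L * E))) / ((E + N)^2)^2
     = chisq_weight_deriv N L q \<alpha>"
    using E N unfolding chisq_weight_deriv_def E_def[symmetric] by (simp add: field_simps) algebra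
  ultimately show ?thesis by simp
qed

lemma scaled_weight_has_derivative:
  assumes "1 + 2*\<alpha> + 2*p > 0" "q > 0" "N > 0"
  shows "((\<lambda>\<alpha>. rate_factor l p \<alpha> * chisq_weight N L q \<alpha>) has_real_derivative scaled_weight_deriv N L q l p \<alpha>) (at \<alpha>)"
  unfolding scaled_weight_deriv_def
  using rate_factor_has_derivative[OF assms(1)] chisq_weight_has_derivative[OF assms(2,3)]
  by (auto intro!: derivative_eq_intros)

lemma continuous_on_scaled_weight_deriv:
  assumes "a \<ge> 0" "p \<ge> 0" "q > 0" "N > 0"
  shows "continuous_on {a..b} (scaled_weight_deriv N L q l p)"
proof -
  have E: "spectral_scale L q x + N \<noteq> 0" for x using spectral_scale_pos[OF assms(3)] assms(4) by (smt (verit))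
  have g: "\<And>x. x \<in> {a..b} \<Longrightarrow> 1 + 2*x + 2*p \<noteq> 0" using assms by auto
  show ?thesis
    unfolding scaled_weight_deriv_def rate_factor_def rate_factor_deriv_def chisq_weight_def
      chisq_weight_deriv_def spectral_scale_def[abs_def]
    using E g unfolding spectral_scale_def by (auto intro!: continuous_intros)
qed

lemma abs_scaled_weight_deriv_le:
  assumes a: "\<alpha> \<ge> 0" and p: "p \<ge> 0" and l: "l \<ge> 0" and L: "L \<ge> 0" and q: "q > 0" and N: "N > 0"
  shows "\<bar>scaled_weight_deriv N L q l p \<alpha>\<bar>
    \<le> 2 * exp (- l / (1 + 2*\<alpha> + 2*p)) * chisq_weight N L q \<alpha> * (1 + l + (1 + 2*\<alpha> + 2*p) * L)"
proof -
  define \<gamma> where "\<gamma> = 1 + 2*\<alpha> + 2*p"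
  define e where "e = exp (- l / \<gamma>)"
  define E where "E = spectral_scale L q \<alpha>"
  define w where "w = chisq_weight N L q \<alpha>"
  have \<gamma>: "\<gamma> \<ge> 1" using a p unfolding \<gamma>_def by simp
  have ep: "e > 0" unfolding e_def by simp
  have Ep: "E > 0" unfolding E_def using spectral_scale_pos[OF q] .
  have w0: "w \<ge> 0" unfolding w_def using chisq_weight_nonneg[OF q L] .
  have "l / \<gamma> \<le> l" using \<gamma> l by (simp add: divide_le_eq mult_le_cancel_left1)
  then have r0: "0 \<le> rate_factor_deriv l p \<alpha>" and r1: "rate_factor_deriv l p \<alpha> \<le> 2 * e * (1 + l)"
    unfolding rate_factor_deriv_def e_def \<gamma>_def[symmetric] using \<gamma> l by auto
  have "rate_factor_deriv l p \<alpha> * w \<le> 2 * e * (1 + l) * w"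
    using r1 w0 by (rule mult_right_mono)
  then have b1: "\<bar>rate_factor_deriv l p \<alpha> * w\<bar> \<le> 2 * e * w * (1 + l)"
    using r0 w0 by (simp add: ac_simps)
  have "chisq_weight_deriv N L q \<alpha> = 2 * L * w * ((N - E) / (E + N))"
    unfolding chisq_weight_deriv_def w_def chisq_weight_def E_def[symmetric]
    using Ep N by (simp add: field_simps power2_eq_square power3_eq_cube)
  then have "\<bar>chisq_weight_deriv N L q \<alpha>\<bar> = 2 * L * w * (\<bar>N - E\<bar> / (E + N))"
    using Ep N L w0 by (simp add: abs_mult abs_divide)
  also have "\<dots> \<le> 2 * L * w"
    using Ep N L w0 by (intro mult_left_le) (auto simp: divide_le_eq)
  finally have b2: "\<bar>rate_factor l p \<alpha> * chisq_weight_deriv N L q \<alpha>\<bar> \<le> \<gamma> * e * (2 * L * w)"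
    unfolding rate_factor_def \<gamma>_def[symmetric] e_def[symmetric] using \<gamma> ep
    by (simp add: abs_mult mult_left_mono)
  have "\<bar>scaled_weight_deriv N L q l p \<alpha>\<bar> \<le> 2 * e * w * (1 + l) + \<gamma> * e * (2 * L * w)"
    unfolding scaled_weight_deriv_def w_def[symmetric] using b1 b2 abs_triangle_ineq by (smt (verit))
  also have "\<dots> = 2 * e * w * (1 + l + \<gamma> * L)" by (simp add: algebra_simps)
  finally show ?thesis unfolding e_def \<gamma>_def w_def .
qed

lemma mult_div_sq_add_le:
  fixes A N L :: real
  assumes A: "A > 0" and N: "N > 0" and L: "L \<ge> 0"
  shows "N * A * L / (A + N)^2 \<le> L * A / N" and "N * A * L / (A + N)^2 \<le> L * N / A"
proof -
  have "N * A * L / (A + N)^2 \<le> N * A * L / N^2"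
    using A N L by (intro divide_left_mono) (auto intro!: power_mono)
  then show "N * A * L / (A + N)^2 \<le> L * A / N" using N by (simp add: power2_eq_square ac_simps)
  have "N * A * L / (A + N)^2 \<le> N * A * L / A^2"
    using A N L by (intro divide_left_mono) (auto intro!: power_mono)
  then show "N * A * L / (A + N)^2 \<le> L * N / A" using A by (simp add: power2_eq_square ac_simps)
qed

lemma pow4_le_exp_half:
  fixes u :: real
  assumes "u \<ge> 0"
  shows "(1 + 2*u)^4 \<le> 65536 * exp (u/2)"
proof -
  have "(1 + 2*u)^4 \<le> (16 * (1 + u/8))^4" using assms by (intro power_mono) auto
  also have "\<dots> = 16^4 * (1 + u/8)^4" by (simp only: power_mult_distrib)
  also have "(1 + u/8)^4 \<le> exp (u/8)^4" using assms by (intro power_mono) auto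
  also have "exp (u/8)^4 = exp (u/2)" by (simp add: exp_of_nat_mult[symmetric])
  finally show ?thesis by simp
qed

text \<open>The two cases below are the indices \<open>i\<close> below and above \<open>n\<^bsup>1/\<gamma>\<^esup>\<close>, written in
  logarithmic coordinates \<open>l = ln n\<close>, \<open>L = ln i\<close>; \<open>A\<close> stands for \<open>i\<^bsup>1+2\<alpha>\<^esup>\<kappa>\<^sub>i\<^sup>-\<^sup>2\<close>, which
  is comparable to \<open>i\<^sup>\<gamma> = exp (\<gamma> L)\<close>.\<close>

lemma weight_term_bounds_low:
  fixes N l \<gamma> L C A :: real
  assumes l: "l \<ge> 2/3" and g: "\<gamma> \<ge> 1" and L: "L \<ge> 0" "\<gamma> * L \<le> l"
    and C: "C \<ge> 1" and A: "A > 0" "A \<le> C^2 * exp (\<gamma> * L)" and N: "exp l = N"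
  shows "N * A * L / (A + N)^2 * (1 + l + \<gamma> * L)^2 \<le> 16 * C^2 * l^3"
    and "(N * A * L / (A + N)^2)^2 * (1 + l + \<gamma> * L)^2 \<le> 16 * C^4 * l^4"
proof -
  define r where "r = N * A * L / (A + N)^2"
  have Np: "N > 0" using N by auto
  have C2: "C^2 \<ge> 1" using C by simp
  have r0: "r \<ge> 0" unfolding r_def using A Np L by simp
  have "L \<le> \<gamma> * L" using g L by (simp add: mult_le_cancel_right1)
  then have Ll: "L \<le> l" using L by simp
  have "exp (\<gamma> * L) \<le> N" using L(2) N by auto
  then have AN: "A \<le> N * C^2" using A(2) C2 by (smt (verit) mult_left_mono mult.commute)
  have "r \<le> L * A / N" unfolding r_def using mult_div_sq_add_le(1)[OF A(1) Np L(1)] .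
  also have "\<dots> \<le> L * (N * C^2) / N" using L AN Np by (intro divide_right_mono mult_left_mono) auto
  also have "\<dots> \<le> l * C^2" using Ll Np C2 by (simp add: mult_right_mono)
  finally have rl: "r \<le> l * C^2" .
  have f0: "0 \<le> 1 + l + \<gamma> * L" using l L g by simp
  have "1 + l + \<gamma> * L \<le> 4 * l" using L(2) l by simp
  from power_mono[OF this f0, of 2] have f2: "(1 + l + \<gamma> * L)^2 \<le> 16 * l^2"
    by (simp add: power_mult_distrib)
  have "r * (1 + l + \<gamma> * L)^2 \<le> (l * C^2) * (16 * l^2)"
    using r0 rl f2 by (intro mult_mono) auto
  then show "N * A * L / (A + N)^2 * (1 + l + \<gamma> * L)^2 \<le> 16 * C^2 * l^3"
    unfolding r_def by (simp add: power2_eq_square power3_eq_cube ac_simps)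
  have "r^2 * (1 + l + \<gamma> * L)^2 \<le> (l * C^2)^2 * (16 * l^2)"
    using r0 rl f2 by (intro mult_mono power_mono) auto
  then show "(N * A * L / (A + N)^2)^2 * (1 + l + \<gamma> * L)^2 \<le> 16 * C^4 * l^4"
    unfolding r_def by (simp add: power2_eq_square power4_eq_xxxx ac_simps)
qed

lemma weight_term_bounds_high:
  fixes N l \<gamma> L C A u :: real
  assumes l: "l \<ge> 2/3" and g: "\<gamma> \<ge> 1" and L: "L \<ge> 0" and u: "u \<ge> 0" "\<gamma> * L = l + u"
    and C: "C \<ge> 1" and A: "A > 0" "exp (\<gamma> * L) \<le> A * C^2" and N: "exp l = N"
  shows "N * A * L / (A + N)^2 * (1 + l + \<gamma> * L)^2 \<le> 2^20 * C^2 * l^3"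
    and "(N * A * L / (A + N)^2)^2 * (1 + l + \<gamma> * L)^2 \<le> 2^20 * C^4 * l^4 * exp (- 3/2 * u)"
proof -
  define r where "r = N * A * L / (A + N)^2"
  have Np: "N > 0" using N by auto
  have C2: "C^2 \<ge> 1" using C by simp
  have r0: "r \<ge> 0" unfolding r_def using A Np L by simp
  have "1 * u \<le> (2 * l) * u" using l u by (intro mult_right_mono) auto
  then have lu: "u \<le> 2 * (l * u)" by simp
  have "N * exp u \<le> A * C^2" using A(2) N u(2) by (simp add: exp_add)
  then have AN: "N * exp u / C^2 \<le> A" using C2 A(1) by (simp add: divide_le_eq)
  have "r \<le> L * N / A" unfolding r_def using mult_div_sq_add_le(2)[OF A(1) Np L] .
  also have "\<dots> \<le> L * N / (N * exp u / C^2)"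
    using L AN Np C2 A(1) by (intro divide_left_mono) (auto intro!: divide_pos_pos mult_pos_pos)
  also have "\<dots> = L * C^2 * exp (- u)" using Np C2 by (simp add: field_simps exp_minus)
  also have "\<dots> \<le> l * (1 + 2*u) * C^2 * exp (- u)"
  proof -
    have "L \<le> \<gamma> * L" using g L by (simp add: mult_le_cancel_right1)
    then have "L \<le> l * (1 + 2*u)" using u(2) lu by (simp add: algebra_simps)
    then show ?thesis by (intro mult_right_mono) auto
  qed
  finally have rb: "r \<le> l * (1 + 2*u) * C^2 * exp (- u)" .
  have f0: "0 \<le> 1 + l + \<gamma> * L" using l L g by simp
  have "4 * l * (1 + 2*u) = 4 * l + 8 * (l * u)" by (simp add: algebra_simps)
  then have "1 + l + \<gamma> * L \<le> 4 * l * (1 + 2*u)" using u l lu by linarith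
  from power_mono[OF this f0, of 2] have f2: "(1 + l + \<gamma> * L)^2 \<le> 16 * l^2 * (1 + 2*u)^2"
    by (simp add: power_mult_distrib)
  have P: "(1 + 2*u)^4 \<le> 65536 * exp (u/2)" using pow4_le_exp_half[OF u(1)] .
  have "r * (1 + l + \<gamma> * L)^2 \<le> (l * (1 + 2*u) * C^2 * exp (- u)) * (16 * l^2 * (1 + 2*u)^2)"
    using r0 rb f2 by (intro mult_mono) auto
  also have "\<dots> = 16 * C^2 * l^3 * ((1 + 2*u)^3 * exp (- u))"
    by (simp add: power2_eq_square power3_eq_cube)
  also have "\<dots> \<le> 16 * C^2 * l^3 * 65536"
  proof -
    have "(1 + 2*u)^3 \<le> (1 + 2*u)^4" using u by (intro power_increasing) auto
    also have "\<dots> \<le> 65536 * exp u"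
    proof -
      have "exp (u/2) \<le> exp u" using u(1) by simp
      then show ?thesis using P by linarith
    qed
    finally show ?thesis using l by (intro mult_left_mono) (auto simp: exp_minus field_simps)
  qed
  finally show "N * A * L / (A + N)^2 * (1 + l + \<gamma> * L)^2 \<le> 2^20 * C^2 * l^3"
    unfolding r_def by simp
  have "r^2 * (1 + l + \<gamma> * L)^2 \<le> (l * (1 + 2*u) * C^2 * exp (- u))^2 * (16 * l^2 * (1 + 2*u)^2)"
    using r0 rb f2 by (intro mult_mono power_mono) auto
  also have "\<dots> = 16 * C^4 * l^4 * ((1 + 2*u)^4 * exp (- 2 * u))"
    by (simp add: power2_eq_square power4_eq_xxxx exp_add[symmetric])
  also have "\<dots> \<le> 16 * C^4 * l^4 * (65536 * exp (- 3/2 * u))"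
  proof -
    have "(1 + 2*u)^4 * exp (- 2 * u) \<le> 65536 * exp (u/2) * exp (- 2 * u)"
      using P by (intro mult_right_mono) auto
    also have "\<dots> = 65536 * exp (- 3/2 * u)" by (simp add: exp_add[symmetric])
    finally show ?thesis using l by (intro mult_left_mono) auto
  qed
  finally show "(N * A * L / (A + N)^2)^2 * (1 + l + \<gamma> * L)^2 \<le> 2^20 * C^4 * l^4 * exp (- 3/2 * u)"
    unfolding r_def by simp
qed

definition tail_profile :: "real \<Rightarrow> real \<Rightarrow> real" where
  "tail_profile x i = (if i \<le> x then 1 else (x / i) * sqrt (x / i))"

lemma weight_term_bounds:
  fixes N l \<gamma> L C i A :: real
  assumes N: "N \<ge> 2" and l: "l = ln N" and g: "\<gamma> \<ge> 1" and i: "i \<ge> 1" and L: "L = ln i"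
    and C: "C \<ge> 1" and A: "A > 0" "exp (\<gamma> * L) \<le> A * C^2" "A \<le> C^2 * exp (\<gamma> * L)"
  shows "N * A * L / (A + N)^2 * (1 + l + \<gamma> * L)^2 \<le> 2^20 * C^2 * \<gamma> * l^3"
    and "(N * A * L / (A + N)^2)^2 * (1 + l + \<gamma> * L)^2 \<le> 2^20 * C^4 * l^4 * tail_profile (exp (l / \<gamma>)) i"
proof -
  have l23: "l \<ge> 2/3" using ln2_ge_two_thirds N unfolding l by (smt (verit) ln_le_cancel_iff)
  have L0: "L \<ge> 0" using i L by simp
  have Nexp: "exp l = N" using l N by simp
  have C2: "C^2 \<ge> 1" using C by simp
  have c3: "0 \<le> C^2 * l^3" using l23 by simp
  have "C^2 * l^3 * 1 \<le> C^2 * l^3 * \<gamma>" using g c3 by (intro mult_left_mono) auto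
  then have l3: "16 * C^2 * l^3 \<le> 2^20 * C^2 * \<gamma> * l^3" "2^20 * C^2 * l^3 \<le> 2^20 * C^2 * \<gamma> * l^3"
    using c3 by (simp_all add: ac_simps)
  have "N * A * L / (A + N)^2 * (1 + l + \<gamma> * L)^2 \<le> 2^20 * C^2 * \<gamma> * l^3
    \<and> (N * A * L / (A + N)^2)^2 * (1 + l + \<gamma> * L)^2 \<le> 2^20 * C^4 * l^4 * tail_profile (exp (l / \<gamma>)) i"
  proof (cases "i \<le> exp (l / \<gamma>)")
    case True
    then have "ln i \<le> ln (exp (l / \<gamma>))" using i by (subst ln_le_cancel_iff) auto
    then have "L \<le> l / \<gamma>" unfolding L by simp
    then have "\<gamma> * L \<le> l" using g by (simp add: field_simps)
    note low = weight_term_bounds_low[OF l23 g L0 this C A(1,3) Nexp]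
    show ?thesis
    proof
    show "N * A * L / (A + N)^2 * (1 + l + \<gamma> * L)^2 \<le> 2^20 * C^2 * \<gamma> * l^3"
      using low(1) l3(1) by linarith
    show "(N * A * L / (A + N)^2)^2 * (1 + l + \<gamma> * L)^2 \<le> 2^20 * C^4 * l^4 * tail_profile (exp (l / \<gamma>)) i"
    proof -
      have "16 * C^4 * l^4 \<le> 2^20 * C^4 * l^4" using l23 C by (intro mult_right_mono) auto
      then show ?thesis using order.trans[OF low(2)] True unfolding tail_profile_def by simp
    qed
    qed
  next
    case False
    define s where "s = L - l / \<gamma>"
    have "ln (exp (l / \<gamma>)) < ln i" using False i by (subst ln_less_cancel_iff) auto
    then have "l / \<gamma> < L" unfolding L by simp
    then have s0: "s > 0" unfolding s_def by simp
    have u: "\<gamma> * s \<ge> 0" "\<gamma> * L = l + \<gamma> * s" using s0 g unfolding s_def by (auto simp: field_simps)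
    note high = weight_term_bounds_high[OF l23 g L0 u C A(1,2) Nexp]
    show ?thesis
    proof
    show "N * A * L / (A + N)^2 * (1 + l + \<gamma> * L)^2 \<le> 2^20 * C^2 * \<gamma> * l^3"
      using high(1) l3(2) by linarith
    have "exp (- 3/2 * (\<gamma> * s)) \<le> exp (- 3/2 * s)" using g s0 by (simp add: mult_le_cancel_right1)
    also have "exp (- 3/2 * s) = tail_profile (exp (l / \<gamma>)) i"
    proof -
      have xi: "exp (l / \<gamma>) / i = exp (- s)"
        unfolding s_def L using i by (simp add: exp_diff)
      have "sqrt (exp (- s)) = exp (- s / 2)"
        by (rule real_sqrt_unique) (simp_all add: exp_add[symmetric] power2_eq_square)
      then show ?thesis unfolding tail_profile_def using False xi by (simp add: exp_add[symmetric])
    qed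
    finally have "2^20 * C^4 * l^4 * exp (- 3/2 * (\<gamma> * s)) \<le> 2^20 * C^4 * l^4 * tail_profile (exp (l / \<gamma>)) i"
      using l23 by (intro mult_left_mono) auto
    then show "(N * A * L / (A + N)^2)^2 * (1 + l + \<gamma> * L)^2 \<le> 2^20 * C^4 * l^4 * tail_profile (exp (l / \<gamma>)) i"
      using high(2) by linarith
    qed
  qed
  then show "N * A * L / (A + N)^2 * (1 + l + \<gamma> * L)^2 \<le> 2^20 * C^2 * \<gamma> * l^3"
    and "(N * A * L / (A + N)^2)^2 * (1 + l + \<gamma> * L)^2 \<le> 2^20 * C^4 * l^4 * tail_profile (exp (l / \<gamma>)) i"
    by auto
qed

lemma inverse_mult_sqrt_le_telescope:
  assumes j: "j \<ge> (1::nat)"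
  shows "1 / (real (Suc j) * sqrt (real (Suc j))) \<le> 2 * (1 / sqrt (real j) - 1 / sqrt (real (Suc j)))"
proof -
  define a where "a = sqrt (real j)"
  define b where "b = sqrt (real (Suc j))"
  have a0: "a > 0" unfolding a_def using j by simp
  have ab: "a \<le> b" unfolding a_def b_def by simp
  have b0: "b > 0" using a0 ab by simp
  have sq: "b^2 = a^2 + 1" unfolding a_def b_def by simp
  have ba: "b - a = 1 / (a + b)"
  proof -
    have "(b - a) * (a + b) = 1" using sq by (simp add: power2_eq_square algebra_simps)
    then show ?thesis using a0 b0 by (simp add: field_simps)
  qed
  have i: "real (Suc j) * sqrt (real (Suc j)) = b^3" unfolding b_def
    by (simp add: power3_eq_cube)
  have "1 / a - 1 / b = (b - a) / (a * b)" using a0 b0 by (simp add: field_simps)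
  also have "\<dots> = 1 / (a * b * (a + b))" unfolding ba by (simp add: ac_simps)
  finally have "2 * (1 / a - 1 / b) = 2 / (a * b * (a + b))" by simp
  moreover have "a * b * (a + b) \<le> b * b * (2 * b)"
    using a0 b0 ab by (intro mult_mono) auto
  then have "1 / b^3 \<le> 2 / (a * b * (a + b))"
  proof -
    assume h: "a * b * (a + b) \<le> b * b * (2 * b)"
    have p: "a * b * (a + b) > 0" using a0 b0 by simp
    have "1 / b^3 = 2 / (b * b * (2 * b))" by (simp add: power3_eq_cube)
    also have "\<dots> \<le> 2 / (a * b * (a + b))" using h p by (intro divide_left_mono) auto
    finally show ?thesis .
  qed
  ultimately have "1 / b^3 \<le> 2 * (1 / a - 1 / b)" by simp
  then show ?thesis using i unfolding a_def b_def by simp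
qed

lemma tail_profile_le_telescope:
  fixes x :: real and j k :: nat
  assumes kx: "real k \<le> x" "x < real k + 1" and k1: "k \<ge> 1"
  shows "tail_profile x (real (Suc j))
    \<le> (if j < k then 1 else 0) + 2 * (x * sqrt x) * (if k \<le> j then 1 / sqrt (real j) - 1 / sqrt (real (Suc j)) else 0)"
proof (cases "j < k")
  case True
  then have "real (Suc j) \<le> x" using kx by linarith
  then show ?thesis using True unfolding tail_profile_def by simp
next
  case False
  then have gt: "\<not> real (Suc j) \<le> x" using kx by linarith
  have j1: "j \<ge> 1" using False k1 by simp
  have xs: "x * sqrt x \<ge> 0" using kx k1 by simp
  have "(x / real (Suc j)) * sqrt (x / real (Suc j)) = (x * sqrt x) * (1 / (real (Suc j) * sqrt (real (Suc j))))"
    by (simp add: real_sqrt_divide)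
  also have "\<dots> \<le> (x * sqrt x) * (2 * (1 / sqrt (real j) - 1 / sqrt (real (Suc j))))"
    using inverse_mult_sqrt_le_telescope[OF j1] xs by (intro mult_left_mono) auto
  also have "\<dots> = 2 * (x * sqrt x) * (1 / sqrt (real j) - 1 / sqrt (real (Suc j)))"
    by (simp only: ac_simps)
  finally show ?thesis using False gt unfolding tail_profile_def by simp
qed

lemma sum_tail_profile_le:
  fixes x :: real assumes x: "x \<ge> 1"
  shows "(\<Sum>j<m. tail_profile x (real (Suc j))) \<le> 4 * x"
proof -
  define k where "k = nat \<lfloor>x\<rfloor>"
  have k1: "k \<ge> 1" unfolding k_def using x by linarith
  have kx: "real k \<le> x" "x < real k + 1" unfolding k_def using x by linarith+
  define D where "D j = 1 / sqrt (real j) - 1 / sqrt (real (Suc j))" for j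
  have D0: "D j \<ge> 0" if "j \<ge> k" for j
  proof -
    have "j \<noteq> 0" using that k1 by simp
    then have "1 / sqrt (real (Suc j)) \<le> 1 / sqrt (real j)" by (intro divide_left_mono) auto
    then show ?thesis unfolding D_def by simp
  qed
  have xs: "x * sqrt x \<ge> 0" using x by simp
  have pt: "tail_profile x (real (Suc j)) \<le> (if j < k then 1 else 0) + 2 * (x * sqrt x) * (if k \<le> j then D j else 0)" for j
    using tail_profile_le_telescope[OF kx k1, of j] unfolding D_def .
  have s1: "(\<Sum>j<m. (if j < k then 1 else 0::real)) \<le> real k"
  proof -
    have "(\<Sum>j<m. (if j < k then 1 else 0::real)) = real (card ({..<m} \<inter> {j. j < k}))"
      by (simp add: sum.If_cases)
    also have "card ({..<m} \<inter> {j. j < k}) \<le> card {..<k}" by (intro card_mono) auto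
    finally show ?thesis by simp
  qed
  have s2: "(\<Sum>j<m. (if k \<le> j then D j else 0)) \<le> 1 / sqrt (real k)"
  proof -
    have "(\<Sum>j<m. (if k \<le> j then D j else 0)) = (\<Sum>j\<in>{..<m} \<inter> {j. k \<le> j}. D j)"
      by (simp add: sum.If_cases)
    also have "\<dots> \<le> (\<Sum>j\<in>{k..<max m k}. D j)"
      using D0 by (intro sum_mono2) (auto simp: max_def)
    also have "\<dots> = 1 / sqrt (real k) - 1 / sqrt (real (max m k))"
      unfolding D_def using sum_Suc_diff'[of k "max m k" "\<lambda>j. - (1 / sqrt (real j))"] by simp
    also have "\<dots> \<le> 1 / sqrt (real k)" by simp
    finally show ?thesis .
  qed
  have "(\<Sum>j<m. tail_profile x (real (Suc j))) \<le> (\<Sum>j<m. (if j < k then 1 else 0) + 2 * (x * sqrt x) * (if k \<le> j then D j else 0))"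
    using pt by (rule sum_mono)
  also have "\<dots> = (\<Sum>j<m. (if j < k then 1 else 0)) + 2 * (x * sqrt x) * (\<Sum>j<m. (if k \<le> j then D j else 0))"
    by (simp add: sum.distrib sum_distrib_left)
  also have "\<dots> \<le> real k + 2 * (x * sqrt x) * (1 / sqrt (real k))"
    using s1 s2 xs by (intro add_mono mult_left_mono) auto
  also have "\<dots> \<le> x + 3 * x"
  proof -
    have "x \<le> 2 * real k" using kx k1 by linarith
    then have "sqrt x \<le> sqrt 2 * sqrt (real k)" by (metis real_sqrt_le_iff real_sqrt_mult)
    then have "sqrt x / sqrt (real k) \<le> sqrt 2" using k1 by (simp add: divide_le_eq)
    also have "sqrt 2 \<le> 3/2" by (rule real_le_lsqrt) (auto simp: power2_eq_square)
    finally have "sqrt x / sqrt (real k) \<le> 3/2" .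
    then have "2 * x * (sqrt x / sqrt (real k)) \<le> 2 * x * (3/2)" using x by (intro mult_left_mono) auto
    then show ?thesis using kx by simp
  qed
  finally show ?thesis by simp
qed

lemma spectral_scale_bounds:
  fixes C p L k \<alpha> :: real
  assumes C: "C \<ge> 1" and k: "inverse C * exp (- p * L) \<le> k" "k \<le> C * exp (- p * L)"
  defines "A \<equiv> exp ((1 + 2*\<alpha>) * L) * inverse (k^2)"
  shows "A > 0" "exp ((1 + 2*\<alpha> + 2*p) * L) \<le> A * C^2" "A \<le> C^2 * exp ((1 + 2*\<alpha> + 2*p) * L)" "k > 0"
proof -
  have Cp: "C > 0" using C by simp
  have "0 < inverse C * exp (- p * L)" using Cp by simp
  then show kp: "k > 0" using k(1) by linarith
  show "A > 0" unfolding A_def using kp by simp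
  have e: "exp ((1 + 2*\<alpha> + 2*p) * L) = exp ((1 + 2*\<alpha>) * L) * exp (p * L)^2"
    by (simp add: exp_add[symmetric] power2_eq_square algebra_simps)
  have k2u: "k^2 \<le> C^2 * exp (- p * L)^2"
    using power_mono[OF k(2), of 2] kp by (simp add: power_mult_distrib)
  have k2l: "inverse C^2 * exp (- p * L)^2 \<le> k^2"
    using power_mono[OF k(1), of 2] Cp by (simp add: power_mult_distrib)
  have ee: "exp (- p * L)^2 * exp (p * L)^2 = 1" by (simp add: power_mult_distrib[symmetric] exp_add[symmetric])
  show "exp ((1 + 2*\<alpha> + 2*p) * L) \<le> A * C^2"
  proof -
    have h: "1 \<le> inverse (k^2) * C^2 * exp (- p * L)^2" using k2u kp by (simp add: field_simps)
    have "exp (p * L)^2 = exp (p * L)^2 * 1" by simp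
    also have "\<dots> \<le> exp (p * L)^2 * (inverse (k^2) * C^2 * exp (- p * L)^2)" by (rule mult_left_mono) (use h in auto)
    also have "\<dots> = inverse (k^2) * C^2 * (exp (- p * L)^2 * exp (p * L)^2)" by (simp only: ac_simps)
    also have "\<dots> = inverse (k^2) * C^2" unfolding ee by simp
    finally have "exp (p * L)^2 \<le> inverse (k^2) * C^2" .
    then have "exp ((1 + 2*\<alpha>) * L) * exp (p * L)^2 \<le> exp ((1 + 2*\<alpha>) * L) * (inverse (k^2) * C^2)"
      by (intro mult_left_mono) auto
    then show ?thesis unfolding e A_def by (simp add: ac_simps)
  qed
  show "A \<le> C^2 * exp ((1 + 2*\<alpha> + 2*p) * L)"
  proof -
    have "inverse (k^2) \<le> inverse (inverse C^2 * exp (- p * L)^2)"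
      using k2l Cp by (intro le_imp_inverse_le) auto
    also have "\<dots> = C^2 * exp (p * L)^2" using ee Cp by (simp add: field_simps power_mult_distrib exp_minus)
    finally have "exp ((1 + 2*\<alpha>) * L) * inverse (k^2) \<le> exp ((1 + 2*\<alpha>) * L) * (C^2 * exp (p * L)^2)"
      by (intro mult_left_mono) auto
    then show ?thesis unfolding e A_def by (simp add: ac_simps)
  qed
qed

lemma variance_weighted_deriv_sq_le:
  fixes N p C \<alpha> i k mu :: real
  assumes N: "N \<ge> 2" and p: "p \<ge> 0" and C: "C \<ge> 1" and a: "\<alpha> \<ge> 0" and i: "i \<ge> 1"
    and kb: "inverse C * i powr (-p) \<le> k" "k \<le> C * i powr (-p)"
  shows "(4 * (k * mu)^2 / N + 2 / N^2) * (scaled_weight_deriv N (ln i) (inverse (k^2)) (ln N) p \<alpha>)^2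
     \<le> 2^24 * C^2 * (1 + 2*\<alpha> + 2*p) * (ln N)^3 * exp (- ln N / (1 + 2*\<alpha> + 2*p))^2
          * (N^2 * i powr (1 + 2*\<alpha>) * mu^2 * ln i / (i powr (1 + 2*\<alpha>) * inverse (k^2) + N)^2)
       + 2^23 * C^4 * (ln N)^4 * exp (- ln N / (1 + 2*\<alpha> + 2*p))^2 * tail_profile (exp (ln N / (1 + 2*\<alpha> + 2*p))) i"
proof -
  define L where "L = ln i"
  define l where "l = ln N"
  define \<gamma> where "\<gamma> = 1 + 2*\<alpha> + 2*p"
  define q where "q = inverse (k^2)"
  define e where "e = exp (- l / \<gamma>)"
  define A where "A = exp ((1 + 2*\<alpha>) * L) * q"
  define r where "r = N * A * L / (A + N)^2"
  have ip: "i > 0" using i by simp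
  have Np: "N > 0" using N by simp
  have g1: "\<gamma> \<ge> 1" unfolding \<gamma>_def using a p by simp
  have L0: "L \<ge> 0" unfolding L_def using i by simp
  have l0: "l \<ge> 0" unfolding l_def using N by simp
  have ipw: "i powr (-p) = exp (- p * L)" unfolding L_def using ip by (simp add: powr_def)
  have ipw2: "i powr (1 + 2*\<alpha>) = exp ((1 + 2*\<alpha>) * L)" unfolding L_def using ip by (simp add: powr_def)
  note kA = spectral_scale_bounds[OF C kb[unfolded ipw]]
  have Ap: "A > 0" and A2: "exp (\<gamma> * L) \<le> A * C^2" and A3: "A \<le> C^2 * exp (\<gamma> * L)" and kp: "k > 0"
    using kA unfolding A_def q_def \<gamma>_def by (auto simp: mult.commute)
  have q0: "q > 0" unfolding q_def using kp by simp
  have w: "chisq_weight N L q \<alpha> = N * r" unfolding chisq_weight_def spectral_scale_def r_def A_def by (simp add: power2_eq_square)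
  have r0: "r \<ge> 0" unfolding r_def using Ap Np L0 by simp
  have Fb: "\<bar>scaled_weight_deriv N L q l p \<alpha>\<bar> \<le> 2 * e * (N * r) * (1 + l + \<gamma> * L)"
    using abs_scaled_weight_deriv_le[OF a p l0 L0 q0 Np] unfolding w e_def \<gamma>_def by simp
  have f0: "0 \<le> 1 + l + \<gamma> * L" using l0 L0 g1 by simp
  have e0: "e > 0" unfolding e_def by simp
  have F2: "(scaled_weight_deriv N L q l p \<alpha>)^2 \<le> 4 * e^2 * N^2 * (r^2 * (1 + l + \<gamma> * L)^2)"
  proof -
    have "(scaled_weight_deriv N L q l p \<alpha>)^2 = \<bar>scaled_weight_deriv N L q l p \<alpha>\<bar>^2" by simp
    also have "\<dots> \<le> (2 * e * (N * r) * (1 + l + \<gamma> * L))^2" using Fb by (intro power_mono) auto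
    also have "\<dots> = 4 * e^2 * N^2 * (r^2 * (1 + l + \<gamma> * L)^2)" by (simp add: power_mult_distrib)
    finally show ?thesis .
  qed
  note TB = weight_term_bounds[OF N l_def g1 i L_def C Ap A2 A3]
  have TB1: "r * (1 + l + \<gamma> * L)^2 \<le> 2^20 * C^2 * \<gamma> * l^3" using TB(1) unfolding r_def .
  have TB2: "r^2 * (1 + l + \<gamma> * L)^2 \<le> 2^20 * C^4 * l^4 * tail_profile (exp (l / \<gamma>)) i" using TB(2) unfolding r_def .
  define HT where "HT = N^2 * i powr (1 + 2*\<alpha>) * mu^2 * ln i / (i powr (1 + 2*\<alpha>) * inverse (k^2) + N)^2"
  have HT: "N * (k * mu)^2 * r = HT"
  proof -
    have "k^2 * q = 1" unfolding q_def using kp by simp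
    then show ?thesis unfolding HT_def r_def A_def ipw2 q_def[symmetric] L_def[symmetric]
      by (simp add: field_simps power2_eq_square)
  qed
  have HT0: "HT \<ge> 0" using HT[symmetric] r0 Np by simp
  have "(4 * (k * mu)^2 / N + 2 / N^2) * (scaled_weight_deriv N L q l p \<alpha>)^2
     \<le> (4 * (k * mu)^2 / N + 2 / N^2) * (4 * e^2 * N^2 * (r^2 * (1 + l + \<gamma> * L)^2))"
    using F2 Np by (intro mult_left_mono) auto
  also have "\<dots> = 16 * e^2 * (N * (k * mu)^2 * r) * (r * (1 + l + \<gamma> * L)^2) + 8 * e^2 * (r^2 * (1 + l + \<gamma> * L)^2)"
    using Np by (simp add: field_simps power2_eq_square)
  also have "\<dots> \<le> 16 * e^2 * HT * (2^20 * C^2 * \<gamma> * l^3) + 8 * e^2 * (2^20 * C^4 * l^4 * tail_profile (exp (l / \<gamma>)) i)"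
    unfolding HT using TB1 TB2 HT0 by (intro add_mono mult_left_mono) auto
  also have "\<dots> = 2^24 * C^2 * \<gamma> * l^3 * e^2 * HT + 2^23 * C^4 * l^4 * e^2 * tail_profile (exp (l / \<gamma>)) i"
    by (simp add: algebra_simps)
  finally show ?thesis unfolding HT_def L_def l_def \<gamma>_def e_def q_def by simp
qed

lemma mult_div_sq_add_le_exp:
  fixes A N L \<gamma> C :: real
  assumes A: "A > 0" and N: "N > 0" and L: "L \<ge> 0" and C: "C > 0" and AC: "exp (\<gamma> * L) \<le> A * C^2"
  shows "A * L / (A + N)^2 \<le> C^2 * (L * exp (- (\<gamma> * L)))"
proof -
  have "A * L / (A + N)^2 \<le> A * L / A^2"
    using A N L by (intro divide_left_mono) (auto intro!: power_mono)
  also have "\<dots> = L / A" using A by (simp add: power2_eq_square)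
  also have "\<dots> \<le> L / (exp (\<gamma> * L) / C^2)"
    using AC C L A by (intro divide_left_mono) (auto simp: divide_le_eq)
  also have "\<dots> = C^2 * (L * exp (- (\<gamma> * L)))" by (simp add: field_simps exp_minus)
  finally show ?thesis .
qed

lemma chisq_coef_bounds:
  fixes N p C \<alpha> i k mu :: real
  assumes N: "N \<ge> 2" and p: "p \<ge> 0" and C: "C \<ge> 1" and a: "\<alpha> \<ge> 0" and i: "i \<ge> 1"
    and kb: "inverse C * i powr (-p) \<le> k" "k \<le> C * i powr (-p)"
  shows "N^2 * i powr (1 + 2*\<alpha>) * mu^2 * ln i / (i powr (1 + 2*\<alpha>) * inverse (k^2) + N)^2 \<le> N^2 * C^4 * mu^2"
    and "N^2 * i powr (1 + 2*\<alpha>) * inverse (k^2) * ln i / (i powr (1 + 2*\<alpha>) * inverse (k^2) + N)^2 * ((k * mu)^2 + 1/N)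
      \<le> N^2 * C^4 * mu^2 + N * C^2 * (ln i * i powr (- (1 + 2*\<alpha>)))"
proof -
  define L where "L = ln i"
  define \<gamma> where "\<gamma> = 1 + 2*\<alpha> + 2*p"
  define A where "A = i powr (1 + 2*\<alpha>) * inverse (k^2)"
  define r where "r = A * L / (A + N)^2"
  have Np: "N > 0" using N by simp
  have L0: "L \<ge> 0" unfolding L_def using i by simp
  have ipw: "i powr x = exp (x * L)" for x unfolding L_def using i by (simp add: powr_def)
  note kA = spectral_scale_bounds[OF C kb[unfolded ipw]]
  have Ap: "A > 0" and A2: "exp (\<gamma> * L) \<le> A * C^2" and kp: "k > 0"
    using kA unfolding A_def \<gamma>_def ipw by (auto simp: mult.commute)
  have decay: "r \<le> C^2 * (L * exp (- (\<gamma> * L)))"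
    unfolding r_def using mult_div_sq_add_le_exp[OF Ap Np L0 _ A2] C by simp
  have "L * exp (- (\<gamma> * L)) \<le> L * exp (- L)"
    using L0 a p unfolding \<gamma>_def by (intro mult_left_mono) (auto simp: mult_le_cancel_right1)
  also have "\<dots> \<le> 1"
  proof -
    have "L \<le> exp L" using exp_ge_add_one_self[of L] by linarith
    then show ?thesis by (simp add: exp_minus field_simps)
  qed
  finally have r1: "r \<le> C^2" using decay C by (smt (verit) mult_left_le zero_le_power2)
  have "exp (- (\<gamma> * L)) \<le> i powr (- (1 + 2*\<alpha>))"
    unfolding ipw \<gamma>_def using mult_nonneg_nonneg[OF p L0] by (simp add: algebra_simps)
  then have r2: "r \<le> C^2 * (L * i powr (- (1 + 2*\<alpha>)))"
    using decay L0 by (smt (verit) mult_left_mono zero_le_power2)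
  have r0: "0 \<le> r" unfolding r_def using Ap L0 by simp
  have "i powr (-p) \<le> 1" using powr_mono[of "-p" 0 i] i p by simp
  then have "C * i powr (-p) \<le> C" using C by (intro mult_left_le) auto
  then have "k^2 \<le> C^2" using kb(2) kp by (intro power_mono) auto
  then have "k^2 * r \<le> C^2 * C^2" using r1 r0 by (intro mult_mono) auto
  then have "N^2 * mu^2 * (k^2 * r) \<le> N^2 * mu^2 * (C^2 * C^2)" by (intro mult_left_mono) auto
  moreover have signal: "N^2 * i powr (1 + 2*\<alpha>) * mu^2 * ln i / (i powr (1 + 2*\<alpha>) * inverse (k^2) + N)^2
     = N^2 * mu^2 * (k^2 * r)"
    unfolding r_def A_def L_def using kp by (simp add: field_simps power2_eq_square)
  ultimately show sig: "N^2 * i powr (1 + 2*\<alpha>) * mu^2 * ln i / (i powr (1 + 2*\<alpha>) * inverse (k^2) + N)^2 \<le> N^2 * C^4 * mu^2"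
    by (simp add: power2_eq_square power4_eq_xxxx ac_simps)
  have "N^2 * i powr (1 + 2*\<alpha>) * inverse (k^2) * ln i / (i powr (1 + 2*\<alpha>) * inverse (k^2) + N)^2 = N^2 * r"
    unfolding r_def A_def L_def by (simp add: mult.assoc)
  then have "N^2 * i powr (1 + 2*\<alpha>) * inverse (k^2) * ln i / (i powr (1 + 2*\<alpha>) * inverse (k^2) + N)^2 * ((k * mu)^2 + 1/N)
     = N^2 * mu^2 * (k^2 * r) + N * r"
    using Np by (simp add: field_simps power2_eq_square)
  also have "\<dots> = N^2 * i powr (1 + 2*\<alpha>) * mu^2 * ln i / (i powr (1 + 2*\<alpha>) * inverse (k^2) + N)^2 + N * r"
    unfolding signal ..
  also have "\<dots> \<le> N^2 * C^4 * mu^2 + N * C^2 * (ln i * i powr (- (1 + 2*\<alpha>)))"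
    using sig r2 Np unfolding L_def by (intro add_mono mult_left_mono) auto
  finally show "N^2 * i powr (1 + 2*\<alpha>) * inverse (k^2) * ln i / (i powr (1 + 2*\<alpha>) * inverse (k^2) + N)^2 * ((k * mu)^2 + 1/N)
      \<le> N^2 * C^4 * mu^2 + N * C^2 * (ln i * i powr (- (1 + 2*\<alpha>)))" .
qed

lemma ln_mult_powr_le:
  fixes i \<alpha> :: real assumes i: "i \<ge> 1" and a: "\<alpha> > 0"
  shows "ln i * i powr (- (1 + 2*\<alpha>)) \<le> (1/\<alpha>) * i powr (- (1 + \<alpha>))"
proof -
  have ip: "i > 0" using i by simp
  have "ln (i powr \<alpha>) \<le> i powr \<alpha> - 1" using ln_le_minus_one[of "i powr \<alpha>"] ip by simp
  then have "ln (i powr \<alpha>) \<le> i powr \<alpha>" by simp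
  then have "\<alpha> * ln i \<le> i powr \<alpha>" using ip by (simp add: ln_powr)
  then have l: "ln i \<le> (1/\<alpha>) * i powr \<alpha>" using a by (simp add: field_simps)
  have "ln i * i powr (- (1 + 2*\<alpha>)) \<le> (1/\<alpha>) * i powr \<alpha> * i powr (- (1 + 2*\<alpha>))"
    using l by (intro mult_right_mono) auto
  also have "\<dots> = (1/\<alpha>) * i powr (- (1 + \<alpha>))" using ip by (simp add: powr_add[symmetric] mult.assoc algebra_simps)
  finally show ?thesis .
qed

lemma summable_ln_powr:
  fixes \<alpha> :: real assumes a: "\<alpha> > 0"
  shows "summable (\<lambda>j. ln (real (Suc j)) * real (Suc j) powr (- (1 + 2*\<alpha>)))"
proof (rule summable_comparison_test')
  have "summable (\<lambda>j. real j powr (- (1 + \<alpha>)))" using a by (simp add: summable_real_powr_iff)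
  then have "summable (\<lambda>j. real (Suc j) powr (- (1 + \<alpha>)))" by (subst summable_Suc_iff)
  then show "summable (\<lambda>j. (1/\<alpha>) * real (Suc j) powr (- (1 + \<alpha>)))" by (rule summable_mult)
  show "norm (ln (real (Suc j)) * real (Suc j) powr (- (1 + 2*\<alpha>))) \<le> (1/\<alpha>) * real (Suc j) powr (- (1 + \<alpha>))" for j
    using ln_mult_powr_le[OF _ a, of "real (Suc j)"] by simp
qed

definition chisq_coef :: "(nat \<Rightarrow> real) \<Rightarrow> real \<Rightarrow> real \<Rightarrow> nat \<Rightarrow> real" where
  "chisq_coef \<kappa> N \<alpha> i = N^2 * real i powr (1 + 2*\<alpha>) * inverse ((\<kappa> i)^2) * ln (real i) /
     (real i powr (1 + 2*\<alpha>) * inverse ((\<kappa> i)^2) + N)^2"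

definition hn_term :: "(nat \<Rightarrow> real) \<Rightarrow> (nat \<Rightarrow> real) \<Rightarrow> real \<Rightarrow> real \<Rightarrow> nat \<Rightarrow> real" where
  "hn_term \<kappa> \<mu> N \<alpha> i = N^2 * real i powr (1 + 2*\<alpha>) * (\<mu> i)^2 * ln (real i) /
     (real i powr (1 + 2*\<alpha>) * inverse ((\<kappa> i)^2) + N)^2"

lemma Mn_eq_chisq_coef:
  "Mn \<kappa> n Y \<alpha> =
     (\<Sum>j. real n * ln (real (Suc j)) / (real (Suc j) powr (1 + 2*\<alpha>) * inverse ((\<kappa> (Suc j))^2) + real n))
   - (\<Sum>j. chisq_coef \<kappa> (real n) \<alpha> (Suc j) * (Y (Suc j))^2)"
  unfolding Mn_def chisq_coef_def ..

lemma hn_eq_hn_term: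
  "hn \<kappa> p \<mu> n \<alpha> = (1 + 2*\<alpha> + 2*p) / (real n powr (1 / (1 + 2*\<alpha> + 2*p)) * ln (real n))
     * (\<Sum>j. hn_term \<kappa> \<mu> (real n) \<alpha> (Suc j))"
  unfolding hn_def hn_term_def ..

lemma sum_variance_weighted_deriv_sq_le:
  fixes \<kappa> \<mu> :: "nat \<Rightarrow> real" and N p C \<alpha> :: real and m :: nat
  assumes N: "N \<ge> 2" and p: "p \<ge> 0" and C: "C \<ge> 1" and a: "\<alpha> \<ge> 0"
    and kb: "\<And>i. i \<ge> 1 \<Longrightarrow> inverse C * real i powr (- p) \<le> \<kappa> i \<and> \<kappa> i \<le> C * real i powr (- p)"
    and hs: "summable (\<lambda>j. hn_term \<kappa> \<mu> N \<alpha> (Suc j))"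
  shows "(\<Sum>j<m. (4 * (\<kappa> (Suc j) * \<mu> (Suc j))^2 / N + 2 / N^2)
            * (scaled_weight_deriv N (ln (real (Suc j))) (inverse ((\<kappa> (Suc j))^2)) (ln N) p \<alpha>)^2)
     \<le> 2^25 * C^4 * (ln N)^4 * (N powr (- 1 / (1 + 2*\<alpha> + 2*p)) *
          (1 + (1 + 2*\<alpha> + 2*p) / (N powr (1 / (1 + 2*\<alpha> + 2*p)) * ln N) *
             (\<Sum>j. hn_term \<kappa> \<mu> N \<alpha> (Suc j))))"
proof -
  define \<gamma> where "\<gamma> = 1 + 2*\<alpha> + 2*p"
  define l where "l = ln N"
  define e where "e = exp (- l / \<gamma>)"
  define x where "x = exp (l / \<gamma>)"
  define HT where "HT j = hn_term \<kappa> \<mu> N \<alpha> (Suc j)" for j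
  define H where "H = (\<Sum>j. HT j)"
  have Np: "N > 0" using N by simp
  have g1: "\<gamma> \<ge> 1" unfolding \<gamma>_def using a p by simp
  have l0: "l > 0" unfolding l_def using N by simp
  have e0: "e > 0" unfolding e_def by simp
  have x1: "x \<ge> 1" unfolding x_def using l0 g1 by simp
  have ex: "e * x = 1" unfolding e_def x_def by (simp add: exp_add[symmetric])
  have HT0: "HT j \<ge> 0" for j unfolding HT_def hn_term_def using N by simp
  have hsum: "summable HT" using hs unfolding HT_def .
  have C2: "C^2 \<le> C^4" using C by (simp add: power_increasing)
  have pj: "(4 * (\<kappa> (Suc j) * \<mu> (Suc j))^2 / N + 2 / N^2)
            * (scaled_weight_deriv N (ln (real (Suc j))) (inverse ((\<kappa> (Suc j))^2)) (ln N) p \<alpha>)^2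
     \<le> 2^24 * C^2 * \<gamma> * l^3 * e^2 * HT j + 2^23 * C^4 * l^4 * e^2 * tail_profile x (real (Suc j))" for j
  proof -
    have kbj: "inverse C * real (Suc j) powr (-p) \<le> \<kappa> (Suc j)" "\<kappa> (Suc j) \<le> C * real (Suc j) powr (-p)"
      using kb[of "Suc j"] by auto
    have i1: "real (Suc j) \<ge> 1" by simp
    show ?thesis using variance_weighted_deriv_sq_le[OF N p C a i1 kbj, where mu="\<mu> (Suc j)"]
      unfolding HT_def hn_term_def \<gamma>_def l_def e_def x_def by simp
  qed
  have "(\<Sum>j<m. (4 * (\<kappa> (Suc j) * \<mu> (Suc j))^2 / N + 2 / N^2)
            * (scaled_weight_deriv N (ln (real (Suc j))) (inverse ((\<kappa> (Suc j))^2)) (ln N) p \<alpha>)^2)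
     \<le> (\<Sum>j<m. 2^24 * C^2 * \<gamma> * l^3 * e^2 * HT j + 2^23 * C^4 * l^4 * e^2 * tail_profile x (real (Suc j)))"
    using pj by (rule sum_mono)
  also have "\<dots> = 2^24 * C^2 * \<gamma> * l^3 * e^2 * (\<Sum>j<m. HT j) + 2^23 * C^4 * l^4 * e^2 * (\<Sum>j<m. tail_profile x (real (Suc j)))"
    by (simp add: sum.distrib sum_distrib_left)
  also have "\<dots> \<le> 2^24 * C^4 * \<gamma> * l^3 * e^2 * H + 2^23 * C^4 * l^4 * e^2 * (4 * x)"
  proof -
    have h1: "(\<Sum>j<m. HT j) \<le> H" unfolding H_def using hsum HT0 by (intro sum_le_suminf) auto
    have h2: "(\<Sum>j<m. tail_profile x (real (Suc j))) \<le> 4 * x" using sum_tail_profile_le[OF x1] .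
    have P0: "0 \<le> 2^24 * \<gamma> * l^3 * e^2" using g1 l0 by simp
    have S0: "0 \<le> (\<Sum>j<m. HT j)" using HT0 by (intro sum_nonneg) auto
    have "C^2 * (\<Sum>j<m. HT j) \<le> C^4 * H" using C2 h1 S0 by (intro mult_mono) auto
    then have "(2^24 * \<gamma> * l^3 * e^2) * (C^2 * (\<Sum>j<m. HT j)) \<le> (2^24 * \<gamma> * l^3 * e^2) * (C^4 * H)"
      using P0 by (intro mult_left_mono) auto
    then have A: "2^24 * C^2 * \<gamma> * l^3 * e^2 * (\<Sum>j<m. HT j) \<le> 2^24 * C^4 * \<gamma> * l^3 * e^2 * H"
      by (simp only: ac_simps)
    have B: "2^23 * C^4 * l^4 * e^2 * (\<Sum>j<m. tail_profile x (real (Suc j))) \<le> 2^23 * C^4 * l^4 * e^2 * (4 * x)"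
      using h2 l0 by (intro mult_left_mono) auto
    from add_mono[OF A B] show ?thesis .
  qed
  also have "\<dots> \<le> 2^25 * C^4 * l^4 * (e * (1 + \<gamma> / (x * l) * H))"
  proof -
    have xe: "x = 1 / e" using ex e0 by (simp add: field_simps)
    have H0: "H \<ge> 0" unfolding H_def using hsum HT0 by (intro suminf_nonneg) auto
    have r: "2^25 * C^4 * l^4 * (e * (1 + \<gamma> / (x * l) * H)) = 2^25 * C^4 * l^4 * e + 2^25 * C^4 * \<gamma> * l^3 * e^2 * H"
      unfolding xe using l0 e0 by (simp add: field_simps power2_eq_square power3_eq_cube power4_eq_xxxx)
    have s2: "2^23 * C^4 * l^4 * e^2 * (4 * x) = 2^25 * C^4 * l^4 * e"
      unfolding xe using e0 by (simp add: field_simps power2_eq_square)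
    have s1: "2^24 * C^4 * \<gamma> * l^3 * e^2 * H \<le> 2^25 * C^4 * \<gamma> * l^3 * e^2 * H"
      using g1 l0 H0 by (intro mult_right_mono) auto
    show ?thesis unfolding r s2[symmetric] using s1 by simp
  qed
  also have "e = N powr (- 1 / (1 + 2*\<alpha> + 2*p))" unfolding e_def l_def \<gamma>_def using Np by (simp add: powr_def)
  also have "x = N powr (1 / (1 + 2*\<alpha> + 2*p))" unfolding x_def l_def \<gamma>_def using Np by (simp add: powr_def)
  finally show ?thesis unfolding H_def HT_def l_def \<gamma>_def .
qed
lemma hn_term_summable_le:
  fixes \<kappa> \<mu> :: "nat \<Rightarrow> real" and N p C \<alpha> :: real
  assumes N: "N \<ge> 2" and p: "p \<ge> 0" and C: "C \<ge> 1" and a: "\<alpha> \<ge> 0"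
    and kb: "\<And>i. i \<ge> 1 \<Longrightarrow> inverse C * real i powr (- p) \<le> \<kappa> i \<and> \<kappa> i \<le> C * real i powr (- p)"
    and sm: "summable (\<lambda>i. (\<mu> i)^2)"
  shows "summable (\<lambda>j. hn_term \<kappa> \<mu> N \<alpha> (Suc j))"
    and "0 \<le> (\<Sum>j. hn_term \<kappa> \<mu> N \<alpha> (Suc j))"
    and "(\<Sum>j. hn_term \<kappa> \<mu> N \<alpha> (Suc j)) \<le> N^2 * C^4 * (\<Sum>j. (\<mu> (Suc j))^2)"
proof -
  have smS: "summable (\<lambda>j. (\<mu> (Suc j))^2)" using sm by (subst summable_Suc_iff)
  then have sm': "summable (\<lambda>j. N^2 * C^4 * (\<mu> (Suc j))^2)" by (rule summable_mult)
  have le: "hn_term \<kappa> \<mu> N \<alpha> (Suc j) \<le> N^2 * C^4 * (\<mu> (Suc j))^2" for j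
    unfolding hn_term_def
    by (rule chisq_coef_bounds(1)[OF N p C a _ kb[of "Suc j", THEN conjunct1] kb[of "Suc j", THEN conjunct2]])
      simp_all
  have ge: "0 \<le> hn_term \<kappa> \<mu> N \<alpha> (Suc j)" for j unfolding hn_term_def using N by simp
  show s: "summable (\<lambda>j. hn_term \<kappa> \<mu> N \<alpha> (Suc j))"
    by (rule summable_comparison_test'[OF sm']) (use le ge in simp)
  then show "0 \<le> (\<Sum>j. hn_term \<kappa> \<mu> N \<alpha> (Suc j))" using ge by (rule suminf_nonneg)
  have "(\<Sum>j. hn_term \<kappa> \<mu> N \<alpha> (Suc j)) \<le> (\<Sum>j. N^2 * C^4 * (\<mu> (Suc j))^2)"
    by (rule suminf_le[OF le s sm'])
  also have "\<dots> = N^2 * C^4 * (\<Sum>j. (\<mu> (Suc j))^2)"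
    using suminf_mult[OF smS] by simp
  finally show "(\<Sum>j. hn_term \<kappa> \<mu> N \<alpha> (Suc j)) \<le> N^2 * C^4 * (\<Sum>j. (\<mu> (Suc j))^2)" .
qed

lemma chisq_coef_second_moment_summable:
  fixes \<kappa> \<mu> :: "nat \<Rightarrow> real" and N p C \<alpha> :: real
  assumes N: "N \<ge> 2" and p: "p \<ge> 0" and C: "C \<ge> 1" and a: "\<alpha> > 0"
    and kb: "\<And>i. i \<ge> 1 \<Longrightarrow> inverse C * real i powr (- p) \<le> \<kappa> i \<and> \<kappa> i \<le> C * real i powr (- p)"
    and sm: "summable (\<lambda>i. (\<mu> i)^2)"
  shows "summable (\<lambda>j. chisq_coef \<kappa> N \<alpha> (Suc j) * ((\<kappa> (Suc j) * \<mu> (Suc j))^2 + 1/N))"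
proof (rule summable_comparison_test')
  show "summable (\<lambda>j. N^2 * C^4 * (\<mu> (Suc j))^2 + N * C^2 * (ln (real (Suc j)) * real (Suc j) powr (- (1 + 2*\<alpha>))))"
    using sm a by (intro summable_add summable_mult summable_ln_powr) (subst summable_Suc_iff)
  fix j
  have a0: "0 \<le> \<alpha>" using a by simp
  have i1: "1 \<le> real (Suc j)" by simp
  have k: "inverse C * real (Suc j) powr (- p) \<le> \<kappa> (Suc j)" "\<kappa> (Suc j) \<le> C * real (Suc j) powr (- p)"
    using kb[of "Suc j"] by auto
  have "0 \<le> chisq_coef \<kappa> N \<alpha> (Suc j) * ((\<kappa> (Suc j) * \<mu> (Suc j))^2 + 1/N)"
    unfolding chisq_coef_def using N by simp
  then show "norm (chisq_coef \<kappa> N \<alpha> (Suc j) * ((\<kappa> (Suc j) * \<mu> (Suc j))^2 + 1/N))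
      \<le> N^2 * C^4 * (\<mu> (Suc j))^2 + N * C^2 * (ln (real (Suc j)) * real (Suc j) powr (- (1 + 2*\<alpha>)))"
    using chisq_coef_bounds(2)[OF N p C a0 i1 k, of "\<mu> (Suc j)", folded chisq_coef_def] by simp
qed

lemma hn_nonneg:
  assumes n: "n \<ge> 2" and p: "p \<ge> 0" and C: "C \<ge> 1" and a: "\<alpha> \<ge> 0"
    and kb: "\<And>i. i \<ge> 1 \<Longrightarrow> inverse C * real i powr (- p) \<le> \<kappa> i \<and> \<kappa> i \<le> C * real i powr (- p)"
    and sm: "summable (\<lambda>i. (\<mu> i)^2)"
  shows "0 \<le> hn \<kappa> p \<mu> n \<alpha>"
proof -
  have N: "real n \<ge> 2" using n by simp
  from hn_term_summable_le(2)[OF this p C a kb sm] show ?thesis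
    unfolding hn_eq_hn_term using a p N by (intro mult_nonneg_nonneg divide_nonneg_nonneg) auto
qed

lemma bdd_above_rate_hn:
  assumes n: "n \<ge> 2" and p: "p \<ge> 0" and C: "C \<ge> 1" and a: "0 \<le> \<alpha>\<^sub>1"
    and kb: "\<And>i. i \<ge> 1 \<Longrightarrow> inverse C * real i powr (- p) \<le> \<kappa> i \<and> \<kappa> i \<le> C * real i powr (- p)"
    and sm: "summable (\<lambda>i. (\<mu> i)^2)"
  shows "bdd_above ((\<lambda>\<alpha>. real n powr (- 1 / (1 + 2*\<alpha> + 2*p)) * (1 + hn \<kappa> p \<mu> n \<alpha>)) ` {\<alpha>\<^sub>1..\<alpha>\<^sub>2})"
proof (rule bdd_aboveI2)
  fix \<alpha> assume \<alpha>: "\<alpha> \<in> {\<alpha>\<^sub>1..\<alpha>\<^sub>2}"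
  define \<gamma> where "\<gamma> = 1 + 2*\<alpha> + 2*p"
  define BH where "BH = (real n)^2 * C^4 * (\<Sum>j. (\<mu> (Suc j))^2)"
  have n1: "2 \<le> real n" "1 \<le> real n" "0 < ln (real n)" using n by auto
  have a0: "0 \<le> \<alpha>" using \<alpha> a by simp
  have \<gamma>: "1 \<le> \<gamma>" "\<gamma> \<le> 1 + 2*\<alpha>\<^sub>2 + 2*p" using \<alpha> a0 p unfolding \<gamma>_def by auto
  note H = hn_term_summable_le(2,3)[OF n1(1) p C a0 kb sm, folded BH_def]
  have "1 \<le> real n powr (1 / \<gamma>)" using n1(2) \<gamma>(1) by (intro ge_one_powr_ge_zero) auto
  then have "\<gamma> / (real n powr (1 / \<gamma>) * ln (real n)) \<le> \<gamma> / (1 * ln (real n))"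
    using n1 \<gamma> by (intro divide_left_mono mult_right_mono) auto
  also have "\<dots> \<le> (1 + 2*\<alpha>\<^sub>2 + 2*p) / ln (real n)"
    using n1 \<gamma> by (simp add: divide_right_mono)
  finally have "hn \<kappa> p \<mu> n \<alpha> \<le> (1 + 2*\<alpha>\<^sub>2 + 2*p) / ln (real n) * BH"
    unfolding hn_eq_hn_term \<gamma>_def[symmetric]
    by (rule mult_mono[OF _ H(2) _ H(1)]) (use n1 \<gamma> in \<open>auto intro!: divide_nonneg_pos\<close>)
  moreover have "0 \<le> hn \<kappa> p \<mu> n \<alpha>" by (rule hn_nonneg[OF n p C a0 kb sm])
  moreover have "real n powr (- 1 / \<gamma>) \<le> 1"
    using powr_mono[of "- 1 / \<gamma>" 0 "real n"] n n1(2) \<gamma>(1) by simp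
  ultimately have "real n powr (- 1 / \<gamma>) * (1 + hn \<kappa> p \<mu> n \<alpha>) \<le> 1 * (1 + (1 + 2*\<alpha>\<^sub>2 + 2*p) / ln (real n) * BH)"
    by (intro mult_mono) auto
  then show "real n powr (- 1 / (1 + 2*\<alpha> + 2*p)) * (1 + hn \<kappa> p \<mu> n \<alpha>)
      \<le> 1 + (1 + 2*\<alpha>\<^sub>2 + 2*p) / ln (real n) * BH"
    unfolding \<gamma>_def by simp
qed

lemma rate_chisq_coef_eq:
  assumes n: "n \<ge> 2" and p: "p \<ge> 0" and a: "\<alpha> \<ge> 0"
  shows "(1 + 2*\<alpha> + 2*p) / real n powr (1 / (1 + 2*\<alpha> + 2*p)) * chisq_coef \<kappa> (real n) \<alpha> i
    = rate_factor (ln (real n)) p \<alpha> * chisq_weight (real n) (ln (real i)) (inverse ((\<kappa> i)^2)) \<alpha>"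
proof (cases "i = 0")
  case False
  have "real n powr (1 / (1 + 2*\<alpha> + 2*p)) = exp (ln (real n) / (1 + 2*\<alpha> + 2*p))"
    using n by (simp add: powr_def)
  moreover have "real i powr (1 + 2*\<alpha>) = exp ((1 + 2*\<alpha>) * ln (real i))"
    using False by (simp add: powr_def)
  ultimately show ?thesis
    unfolding rate_factor_def chisq_weight_def spectral_scale_def chisq_coef_def
    by (simp add: exp_minus field_simps)
qed (simp add: chisq_coef_def chisq_weight_def)

lemma weighted_sq_coef_increments_le:
  fixes \<kappa> \<mu> :: "nat \<Rightarrow> real"
  assumes n: "n \<ge> 2" and p: "p \<ge> 0" and C: "C \<ge> 1" and a: "0 < \<alpha>\<^sub>1" "\<alpha>\<^sub>1 < \<alpha>\<^sub>2"
    and kb: "\<And>i. i \<ge> 1 \<Longrightarrow> inverse C * real i powr (- p) \<le> \<kappa> i \<and> \<kappa> i \<le> C * real i powr (- p)"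
    and sm: "summable (\<lambda>i. (\<mu> i)^2)"
  shows "(\<Sum>j<m. ((1 + 2*\<alpha>\<^sub>1 + 2*p) / real n powr (1 / (1 + 2*\<alpha>\<^sub>1 + 2*p)) * chisq_coef \<kappa> (real n) \<alpha>\<^sub>1 (Suc j)
             - (1 + 2*\<alpha>\<^sub>2 + 2*p) / real n powr (1 / (1 + 2*\<alpha>\<^sub>2 + 2*p)) * chisq_coef \<kappa> (real n) \<alpha>\<^sub>2 (Suc j))^2
             * (4 * (\<kappa> (Suc j) * \<mu> (Suc j))^2 / real n + 2 / (real n)^2))
    \<le> 2^25 * C^4 * (\<alpha>\<^sub>1 - \<alpha>\<^sub>2)^2 * (ln (real n))^4
       * (SUP \<alpha>\<in>{\<alpha>\<^sub>1..\<alpha>\<^sub>2}. real n powr (- 1 / (1 + 2*\<alpha> + 2*p)) * (1 + hn \<kappa> p \<mu> n \<alpha>))"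
proof -
  define N where "N = real n"
  define l where "l = ln N"
  define q where "q j = inverse ((\<kappa> (Suc j))^2)" for j
  define F where "F j \<alpha> = rate_factor l p \<alpha> * chisq_weight N (ln (real (Suc j))) (q j) \<alpha>" for j \<alpha>
  define v where "v j = 4 * (\<kappa> (Suc j) * \<mu> (Suc j))^2 / N + 2 / N^2" for j
  define S where "S = (SUP \<alpha>\<in>{\<alpha>\<^sub>1..\<alpha>\<^sub>2}. real n powr (- 1 / (1 + 2*\<alpha> + 2*p)) * (1 + hn \<kappa> p \<mu> n \<alpha>))"
  have N: "N \<ge> 2" "N > 0" unfolding N_def using n by auto
  have q: "q j > 0" for j
  proof -
    have "0 < inverse C * real (Suc j) powr (- p)" using C by simp
    then have "0 < \<kappa> (Suc j)" using kb[of "Suc j"] by linarith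
    then show ?thesis unfolding q_def by simp
  qed
  have v: "v j \<ge> 0" for j unfolding v_def using N by simp
  have bdd: "bdd_above ((\<lambda>\<alpha>. real n powr (- 1 / (1 + 2*\<alpha> + 2*p)) * (1 + hn \<kappa> p \<mu> n \<alpha>)) ` {\<alpha>\<^sub>1..\<alpha>\<^sub>2})"
    using bdd_above_rate_hn[OF n p C _ kb sm] a by simp
  have deriv: "(\<Sum>j<m. v j * (scaled_weight_deriv N (ln (real (Suc j))) (q j) l p x)^2)
      \<le> 2^25 * C^4 * l^4 * S" if x: "x \<in> {\<alpha>\<^sub>1..\<alpha>\<^sub>2}" for x
  proof -
    have x0: "x \<ge> 0" using x a by simp
    note hs = hn_term_summable_le(1)[OF N(1) p C x0 kb sm]
    have "(\<Sum>j<m. v j * (scaled_weight_deriv N (ln (real (Suc j))) (q j) l p x)^2)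
        \<le> 2^25 * C^4 * l^4 * (real n powr (- 1 / (1 + 2*x + 2*p)) * (1 + hn \<kappa> p \<mu> n x))"
      using sum_variance_weighted_deriv_sq_le[OF N(1) p C x0 kb hs, of m]
      unfolding v_def q_def l_def hn_eq_hn_term N_def by simp
    also have "\<dots> \<le> 2^25 * C^4 * l^4 * S"
      unfolding S_def using cSUP_upper[OF x bdd] N C unfolding l_def by (intro mult_left_mono) auto
    finally show ?thesis .
  qed
  have inc: "(\<Sum>j<m. v j * (F j \<alpha>\<^sub>1 - F j \<alpha>\<^sub>2)^2) \<le> (\<alpha>\<^sub>2 - \<alpha>\<^sub>1)^2 * (2^25 * C^4 * l^4 * S)"
  proof (rule weighted_sum_sq_increments_le[OF _ _ _ v deriv])
    show "(F j has_real_derivative scaled_weight_deriv N (ln (real (Suc j))) (q j) l p x) (at x)"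
      if "x \<in> {\<alpha>\<^sub>1..\<alpha>\<^sub>2}" for j x
      unfolding F_def using that a p q N by (intro scaled_weight_has_derivative) auto
    show "continuous_on {\<alpha>\<^sub>1..\<alpha>\<^sub>2} (scaled_weight_deriv N (ln (real (Suc j))) (q j) l p)" for j
      using a p q N by (intro continuous_on_scaled_weight_deriv) auto
  qed (use a in simp)
  have F: "F j \<alpha> = (1 + 2*\<alpha> + 2*p) / real n powr (1 / (1 + 2*\<alpha> + 2*p)) * chisq_coef \<kappa> (real n) \<alpha> (Suc j)"
    if "\<alpha> \<ge> 0" for j \<alpha>
    unfolding F_def q_def l_def N_def using rate_chisq_coef_eq[OF n p that] by simp
  have "(\<Sum>j<m. ((1 + 2*\<alpha>\<^sub>1 + 2*p) / real n powr (1 / (1 + 2*\<alpha>\<^sub>1 + 2*p)) * chisq_coef \<kappa> (real n) \<alpha>\<^sub>1 (Suc j)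
             - (1 + 2*\<alpha>\<^sub>2 + 2*p) / real n powr (1 / (1 + 2*\<alpha>\<^sub>2 + 2*p)) * chisq_coef \<kappa> (real n) \<alpha>\<^sub>2 (Suc j))^2
             * (4 * (\<kappa> (Suc j) * \<mu> (Suc j))^2 / real n + 2 / (real n)^2))
      = (\<Sum>j<m. v j * (F j \<alpha>\<^sub>1 - F j \<alpha>\<^sub>2)^2)"
    using a by (intro sum.cong refl) (simp add: F v_def N_def mult.commute)
  also have "\<dots> \<le> (\<alpha>\<^sub>2 - \<alpha>\<^sub>1)^2 * (2^25 * C^4 * l^4 * S)" by (rule inc)
  also have "\<dots> = 2^25 * C^4 * (\<alpha>\<^sub>1 - \<alpha>\<^sub>2)^2 * (ln (real n))^4 * S"
    unfolding l_def N_def by (simp add: power2_commute)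
  finally show ?thesis unfolding S_def .
qed

theorem lemma5p3:
  fixes M :: "'a measure" and Z :: "nat \<Rightarrow> 'a \<Rightarrow> real"
    and \<kappa> :: "nat \<Rightarrow> real" and p C :: real
  assumes "prob_space M"
    and "prob_space.indep_vars M (\<lambda>_. borel) Z UNIV"
    and "\<And>i. distributed M lborel (Z i) (\<lambda>x. ennreal (std_normal_density x))"
    and "p \<ge> 0" and "C \<ge> 1"
    and "\<And>i. i \<ge> 1 \<Longrightarrow> inverse C * real i powr (- p) \<le> \<kappa> i \<and> \<kappa> i \<le> C * real i powr (- p)"
  shows "\<exists>K>0. \<forall>(\<mu>::nat \<Rightarrow> real) (\<alpha>\<^sub>1::real) \<alpha>\<^sub>2 (n::nat).
           summable (\<lambda>i. (\<mu> i)\<^sup>2) \<and> 0 < \<alpha>\<^sub>1 \<and> \<alpha>\<^sub>1 < \<alpha>\<^sub>2 \<and> n \<ge> 2 \<longrightarrow>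
           var_on M (\<lambda>\<omega>.
               (1 + 2*\<alpha>\<^sub>1 + 2*p) * Mn \<kappa> n (\<lambda>i. obsY \<kappa> \<mu> n Z i \<omega>) \<alpha>\<^sub>1
                 / real n powr (1 / (1 + 2*\<alpha>\<^sub>1 + 2*p))
             - (1 + 2*\<alpha>\<^sub>2 + 2*p) * Mn \<kappa> n (\<lambda>i. obsY \<kappa> \<mu> n Z i \<omega>) \<alpha>\<^sub>2
                 / real n powr (1 / (1 + 2*\<alpha>\<^sub>2 + 2*p)))
           \<le> K * (\<alpha>\<^sub>1 - \<alpha>\<^sub>2)\<^sup>2 * (ln (real n)) ^ 4
               * (SUP \<alpha>\<in>{\<alpha>\<^sub>1..\<alpha>\<^sub>2}. real n powr (- 1 / (1 + 2*\<alpha> + 2*p)) * (1 + hn \<kappa> p \<mu> n \<alpha>))"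
proof (intro exI[of _ "2^25 * C^4"] conjI allI impI)
  note P = assms(1) and I = assms(2) and D = assms(3) and p = assms(4) and C = assms(5) and kb = assms(6)
  show "(0::real) < 2^25 * C^4" using C by simp
  fix \<mu> :: "nat \<Rightarrow> real" and \<alpha>\<^sub>1 \<alpha>\<^sub>2 :: real and n :: nat
  assume "summable (\<lambda>i. (\<mu> i)\<^sup>2) \<and> 0 < \<alpha>\<^sub>1 \<and> \<alpha>\<^sub>1 < \<alpha>\<^sub>2 \<and> n \<ge> 2"
  then have sm: "summable (\<lambda>i. (\<mu> i)\<^sup>2)" and a: "0 < \<alpha>\<^sub>1" "\<alpha>\<^sub>1 < \<alpha>\<^sub>2" and n: "n \<ge> 2" by auto
  have N: "real n \<ge> 2" "real n > 0" using n by auto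
  define f where "f \<alpha> = real n powr (- 1 / (1 + 2*\<alpha> + 2*p)) * (1 + hn \<kappa> p \<mu> n \<alpha>)" for \<alpha>
  have "0 \<le> f \<alpha>\<^sub>1" unfolding f_def using hn_nonneg[OF n p C _ kb sm] a by simp
  also have "f \<alpha>\<^sub>1 \<le> (SUP \<alpha>\<in>{\<alpha>\<^sub>1..\<alpha>\<^sub>2}. f \<alpha>)"
    using bdd_above_rate_hn[OF n p C _ kb sm] a unfolding f_def by (intro cSUP_upper) auto
  finally have B: "0 \<le> 2^25 * C^4 * (\<alpha>\<^sub>1 - \<alpha>\<^sub>2)^2 * (ln (real n))^4 * (SUP \<alpha>\<in>{\<alpha>\<^sub>1..\<alpha>\<^sub>2}. f \<alpha>)"
    using C by simp
  have coef: "0 \<le> chisq_coef \<kappa> (real n) \<alpha> (Suc j)" if "\<alpha> > 0" for \<alpha> j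
    unfolding chisq_coef_def using that by simp
  note summ = chisq_coef_second_moment_summable[OF N(1) p C _ kb sm]
  from var_on_diff_weighted_shifted_std_normal_sq_le[where a="\<lambda>i. \<kappa> i * \<mu> i", OF P I D N(2) coef coef
      summ summ B weighted_sq_coef_increments_le[OF n p C a kb sm, unfolded f_def[symmetric]]] a
  show "var_on M (\<lambda>\<omega>.
               (1 + 2*\<alpha>\<^sub>1 + 2*p) * Mn \<kappa> n (\<lambda>i. obsY \<kappa> \<mu> n Z i \<omega>) \<alpha>\<^sub>1
                 / real n powr (1 / (1 + 2*\<alpha>\<^sub>1 + 2*p))
             - (1 + 2*\<alpha>\<^sub>2 + 2*p) * Mn \<kappa> n (\<lambda>i. obsY \<kappa> \<mu> n Z i \<omega>) \<alpha>\<^sub>2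
                 / real n powr (1 / (1 + 2*\<alpha>\<^sub>2 + 2*p)))
           \<le> 2^25 * C^4 * (\<alpha>\<^sub>1 - \<alpha>\<^sub>2)\<^sup>2 * (ln (real n)) ^ 4
               * (SUP \<alpha>\<in>{\<alpha>\<^sub>1..\<alpha>\<^sub>2}. real n powr (- 1 / (1 + 2*\<alpha> + 2*p)) * (1 + hn \<kappa> p \<mu> n \<alpha>))"
    unfolding Mn_eq_chisq_coef obsY_def f_def by simp
qed

end
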